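(* Let $K\ge 1$ be an integer, let the potential split as $U=\sum_{i=1}^K U_i$ (one term per mini-batch), and let $\mathcal{L}=\sum_{i=1}^K\mathcal{L}_i$ with \[ \mathcal{L}_i=-(\nabla_{\boldsymbol{\theta}}U_i(\boldsymbol{\theta}))^\top\nabla_{\mathbf{r}}+K^{-1}(\mathbf{M}^{-1}\mathbf{r})^\top\nabla_{\boldsymbol{\theta}}-K^{-1}C(\mathbf{M}^{-1}\mathbf{r})^\top\nabla_{\mathbf{r}}+K^{-1}C\nabla_{\mathbf{r}}^\top\nabla_{\mathbf{r}}. \] For $i=1,\dots,K$ let $\psi_i(\cdot;\eta)$ be a (stochastic) numerical integrator with step size $\eta$ of order $p$ for $\mathcal{L}_i$ in the sense that $\mathbb{E}[\phi(\psi_i(\mathbf{z}_0;\eta))]=\exp(\eta K\mathcal{L}_i)\phi(\mathbf{z}_0)+\mathcal{O}(\eta^{p+1})$. Draw a permutation $\boldsymbol{\pi}=(\pi_1,\dots,\pi_K)$ of $\{1,\dots,K\}$ uniformly at random and set $\mathbf{z}_{fin}=\psi_{\pi_K}(\psi_{\pi_{K-1}}(\cdots\psi_{\pi_1}(\mathbf{z}_0)))$. Then the operator $\mathcal{U}$ defined by $\mathcal{U}\phi(\mathbf{z}_0)=\mathbb{E}[\phi(\mathbf{z}_{fin})]$ (expectation over the permutation and the integrators' randomness) satisfies \[ \mathcal{U}=\exp(\eta K\mathcal{L})+\mathcal{O}(K\eta^{p+1})+\mathcal{O}(K\eta^{3})\quad\text{as }\eta\to0. \]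
   Context: Setting: $\mathbf{z}=[\mathbf{r}^\top,\boldsymbol{\theta}^\top]^\top\in\mathbb{R}^{2d}$, $C>0$, $\mathbf{M}$ symmetric positive definite. For a generator $\mathcal{A}$ of a diffusion, $\exp(t\mathcal{A})\phi(\mathbf{z}_0)$ denotes the solution of the associated Kolmogorov backward equation, i.e. $\mathbb{E}[\phi(\mathbf{z}(t))]$ for the diffusion with generator $\mathcal{A}$ started at $\mathbf{z}_0$; $\mathcal{L}$ is the generator of $d\mathbf{r}=-\nabla U\,dt-C\mathbf{M}^{-1}\mathbf{r}\,dt+\sqrt{2C}\,d\mathbf{w}$, $d\boldsymbol{\theta}=\mathbf{M}^{-1}\mathbf{r}\,dt$. The identities are between operators acting on test functions $\phi$, understood via Taylor expansions in $\eta$. Standing assumptions: $U$ (and each $U_i$) is smooth with bounded derivatives of all orders; test functions $\phi$ are sufficiently many times continuously differentiable with partial derivatives of polynomial growth and $|\phi(\mathbf{z})|\le R(1+|\mathbf{z}|^s)$; each integrator step $\mathbf{z}_1=\psi(\mathbf{z}_0)$ satisfies $|\mathbb{E}(\mathbf{z}_1-\mathbf{z}_0)|\le R'(1+|\mathbf{z}_0|)\eta$ and $|\mathbf{z}_1-\mathbf{z}_0|\le M_n(1+|\mathbf{z}_0|)\sqrt{\eta}$ with $M_n$ having bounded moments of all orders independent of $\eta$. *)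

theory Defs
  imports "HOL-Probability.Probability" "HOL-Combinatorics.Multiset_Permutations"
begin

text \<open>Phase-space points z = (r, theta) with r, theta in R^d (d = CARD('d)).\<close>
type_synonym 'd phase = "(real^'d) \<times> (real^'d)"

definition pd :: "('a::real_normed_vector \<Rightarrow> real) \<Rightarrow> 'a \<Rightarrow> 'a \<Rightarrow> real" where
  "pd f v z = deriv (\<lambda>t. f (z + t *\<^sub>R v)) 0"

primrec iter_dd :: "('a::real_normed_vector \<Rightarrow> real) \<Rightarrow> 'a list \<Rightarrow> 'a \<Rightarrow> real" where
  "iter_dd f [] = f"
| "iter_dd f (v # vs) = pd (iter_dd f vs) v"

definition test_fun :: "('a::real_normed_vector \<Rightarrow> real) \<Rightarrow> bool" where
  "test_fun f \<longleftrightarrow> (\<forall>vs. (\<forall>z. iter_dd f vs differentiable at z) \<and>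
      (\<exists>B q. \<forall>z. \<bar>iter_dd f vs z\<bar> \<le> B * (1 + norm z ^ q)))"

definition smooth_bdd_deriv :: "('a::real_normed_vector \<Rightarrow> real) \<Rightarrow> bool" where
  "smooth_bdd_deriv f \<longleftrightarrow> (\<forall>vs. (\<forall>z. iter_dd f vs differentiable at z) \<and>
      (vs \<noteq> [] \<longrightarrow> bounded (range (iter_dd f vs))))"

definition er :: "'d::finite \<Rightarrow> 'd phase" where "er j = (axis j 1, 0)"
definition eth :: "'d::finite \<Rightarrow> 'd phase" where "eth j = (0, axis j 1)"

text \<open>The operator
  -(grad_theta V)^T grad_r + a (Minv r)^T grad_theta - c (Minv r)^T grad_r + c grad_r^T grad_r.
  The full generator is Lop U 1 C Minv; L_i = Lop (U i) (1/K) (C/K) Minv.\<close>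
definition Lop :: "(real^'d \<Rightarrow> real) \<Rightarrow> real \<Rightarrow> real \<Rightarrow> real^'d^'d
                   \<Rightarrow> ('d::finite phase \<Rightarrow> real) \<Rightarrow> 'd phase \<Rightarrow> real" where
  "Lop V a c Minv \<phi> z =
     (let r = fst z; \<theta> = snd z; u = Minv *v r in
       - (\<Sum>j\<in>UNIV. pd V (axis j 1) \<theta> * pd \<phi> (er j) z)
       + a * (\<Sum>j\<in>UNIV. u $ j * pd \<phi> (eth j) z)
       - c * (\<Sum>j\<in>UNIV. u $ j * pd \<phi> (er j) z)
       + c * (\<Sum>j\<in>UNIV. pd (pd \<phi> (er j)) (er j) z))"

text \<open>exp(t A) phi, understood via its Taylor expansion in t truncated after order N.\<close>
definition texp :: "nat \<Rightarrow> real \<Rightarrow> (('a \<Rightarrow> real) \<Rightarrow> ('a \<Rightarrow> real)) \<Rightarrow> ('a \<Rightarrow> real) \<Rightarrow> 'a \<Rightarrow> real" where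
  "texp N t A \<phi> z = (\<Sum>k\<le>N. t ^ k / fact k * (A ^^ k) \<phi> z)"

definition weak_O :: "(real \<Rightarrow> 'a::real_normed_vector \<Rightarrow> real) \<Rightarrow> (real \<Rightarrow> real) \<Rightarrow> bool" where
  "weak_O R g \<longleftrightarrow> (\<exists>Cc q \<eta>0. \<eta>0 > 0 \<and>
      (\<forall>\<eta>\<in>{0<..\<eta>0}. \<forall>z. \<bar>R \<eta> z\<bar> \<le> Cc * (1 + norm z ^ q) * g \<eta>))"

text \<open>Standing assumptions on a one-step Markov kernel psi(eta) (z1 ~ psi eta z0).\<close>
definition good_step :: "(real \<Rightarrow> 'a::euclidean_space \<Rightarrow> 'a measure) \<Rightarrow> bool" where
  "good_step \<psi> \<longleftrightarrow>
     (\<forall>\<eta>>0. \<psi> \<eta> \<in> borel \<rightarrow>\<^sub>M prob_algebra borel) \<and>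
     (\<exists>R' \<eta>0. \<eta>0 > 0 \<and>
        (\<forall>\<eta>\<in>{0<..\<eta>0}. \<forall>z0. norm (\<integral>z1. (z1 - z0) \<partial>(\<psi> \<eta> z0)) \<le> R' * (1 + norm z0) * \<eta>) \<and>
        (\<forall>m::nat. \<exists>B. \<forall>\<eta>\<in>{0<..\<eta>0}. \<forall>z0.
            (\<integral>\<^sup>+z1. ennreal ((norm (z1 - z0) / ((1 + norm z0) * sqrt \<eta>)) ^ m) \<partial>(\<psi> \<eta> z0))
              \<le> ennreal B))"

primrec run :: "(nat \<Rightarrow> 'a::topological_space \<Rightarrow> 'a measure) \<Rightarrow> nat list \<Rightarrow> 'a \<Rightarrow> 'a measure" where
  "run k [] z = return borel z"
| "run k (i # is) z = bind (k i z) (\<lambda>z'. run k is z')"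

definition Uop :: "nat \<Rightarrow> (nat \<Rightarrow> real \<Rightarrow> 'a::topological_space \<Rightarrow> 'a measure) \<Rightarrow> real
                  \<Rightarrow> ('a \<Rightarrow> real) \<Rightarrow> 'a \<Rightarrow> real" where
  "Uop K \<psi> \<eta> \<phi> z0 = measure_pmf.expectation (pmf_of_set (permutations_of_set {1..K}))
       (\<lambda>\<pi>. \<integral>z. \<phi> z \<partial>(run (\<lambda>i. \<psi> i \<eta>) \<pi> z0))"

end

theory Submission
  imports Defs
begin

text \<open>
  Each integrator \<open>\<psi>\<^sub>i\<close> acts on test functions as \<open>exp (\<eta> K L\<^sub>i)\<close> up to \<open>O(\<eta>^(p+1))\<close>,
  and its polynomial moments are bounded uniformly in \<open>\<eta>\<close>; the moment bounds let the
  remainders be integrated along a chain of integrators. Hence, for a fixed ordering \<open>\<pi>\<close>,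
  the chain acts as the product \<open>exp (\<eta> K L\<^bsub>\<pi>\<^sub>1\<^esub>) \<dots> exp (\<eta> K L\<^bsub>\<pi>\<^sub>K\<^esub>)\<close>, truncated at
  order \<open>n = min p 2\<close>, up to \<open>O(\<eta>^(n+1))\<close>. The coefficients of order 0 and 1 of this product
  do not depend on \<open>\<pi>\<close>. The coefficient of order 2 is \<open>K\<^sup>2\<close> times
  \<open>\<Sum>\<^bsub>a before b\<^esub> L\<^sub>a L\<^sub>b + \<Sum>\<^sub>a L\<^sub>a\<^sup>2 / 2\<close>; averaged with the reversed ordering it becomes
  \<open>K\<^sup>2 (\<Sum>\<^sub>a L\<^sub>a)\<^sup>2 / 2\<close>, the coefficient of \<open>exp (\<eta> K L)\<close>. So the average over all orderings
  agrees with \<open>exp (\<eta> K L)\<close> up to \<open>O(\<eta>^(n+1))\<close>, and \<open>\<eta>^(n+1) \<le> K \<eta>^(p+1) + K \<eta>^3\<close> for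
  \<open>\<eta> \<le> 1\<close>.
\<close>

section \<open>Polynomial growth and directional derivatives\<close>

definition poly_growth :: "('a::real_normed_vector \<Rightarrow> real) \<Rightarrow> bool" where
  "poly_growth f \<longleftrightarrow> (\<exists>B q. \<forall>z. \<bar>f z\<bar> \<le> B * (1 + norm z ^ q))"

lemma power_le_one_plus_power:
  fixes a :: real
  assumes "0 \<le> a" "q \<le> q'"
  shows "a ^ q \<le> 1 + a ^ q'"
proof (cases "a \<le> 1")
  case True
  then have "a ^ q \<le> 1" using assms by (simp add: power_le_one)
  then show ?thesis using assms by (smt (verit) zero_le_power)
next
  case False
  then show ?thesis using assms by (smt (verit) power_increasing)
qed

lemma poly_weight_le:
  fixes z :: "'a::real_normed_vector"
  assumes "q \<le> q'"
  shows "1 + norm z ^ q \<le> 2 * (1 + norm z ^ q')"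
  using power_le_one_plus_power[OF norm_ge_zero assms, of z] zero_le_power[OF norm_ge_zero, of z q']
  by argo

lemma poly_bound_coeff_nonneg:
  fixes B :: real
  assumes "\<bar>f z\<bar> \<le> B * (1 + norm z ^ q)"
  shows "0 \<le> B"
proof -
  have "0 < 1 + norm z ^ q" by (simp add: add_pos_nonneg)
  with assms show ?thesis by (smt (verit) abs_ge_zero zero_le_mult_iff)
qed

lemma poly_growth_add:
  assumes "poly_growth f" "poly_growth g"
  shows "poly_growth (\<lambda>x. f x + g x)"
proof -
  obtain B1 q1 where f: "\<And>z. \<bar>f z\<bar> \<le> B1 * (1 + norm z ^ q1)"
    using assms(1) unfolding poly_growth_def by blast
  obtain B2 q2 where g: "\<And>z. \<bar>g z\<bar> \<le> B2 * (1 + norm z ^ q2)"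
    using assms(2) unfolding poly_growth_def by blast
  have B: "0 \<le> B1" "0 \<le> B2" using f g poly_bound_coeff_nonneg by blast+
  have "\<bar>f z + g z\<bar> \<le> (2 * B1 + 2 * B2) * (1 + norm z ^ (q1 + q2))" for z
  proof -
    have "B1 * (1 + norm z ^ q1) \<le> B1 * (2 * (1 + norm z ^ (q1 + q2)))"
      "B2 * (1 + norm z ^ q2) \<le> B2 * (2 * (1 + norm z ^ (q1 + q2)))"
      using B by (intro mult_left_mono poly_weight_le; simp)+
    with f[of z] g[of z] show ?thesis by (simp add: algebra_simps abs_triangle_ineq[THEN order_trans])
  qed
  then show ?thesis unfolding poly_growth_def by blast
qed

lemma poly_growth_mult:
  assumes "poly_growth f" "poly_growth g"
  shows "poly_growth (\<lambda>x. f x * g x)"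
proof -
  obtain B1 q1 where f: "\<And>z. \<bar>f z\<bar> \<le> B1 * (1 + norm z ^ q1)"
    using assms(1) unfolding poly_growth_def by blast
  obtain B2 q2 where g: "\<And>z. \<bar>g z\<bar> \<le> B2 * (1 + norm z ^ q2)"
    using assms(2) unfolding poly_growth_def by blast
  have B: "0 \<le> B1" "0 \<le> B2" using f g poly_bound_coeff_nonneg by blast+
  have "\<bar>f z * g z\<bar> \<le> (3 * B1 * B2) * (1 + norm z ^ (q1 + q2))" for z
  proof -
    have "\<bar>f z * g z\<bar> \<le> (B1 * (1 + norm z ^ q1)) * (B2 * (1 + norm z ^ q2))"
      unfolding abs_mult using f g B by (intro mult_mono) auto
    also have "\<dots> = B1 * B2 * (1 + norm z ^ q1 + norm z ^ q2 + norm z ^ (q1 + q2))"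
      by (simp add: algebra_simps power_add)
    also have "\<dots> \<le> B1 * B2 * (3 * (1 + norm z ^ (q1 + q2)))"
    proof -
      have "norm z ^ q1 \<le> 1 + norm z ^ (q1 + q2)" "norm z ^ q2 \<le> 1 + norm z ^ (q1 + q2)"
        by (simp_all add: power_le_one_plus_power)
      with B show ?thesis by (intro mult_left_mono) auto
    qed
    finally show ?thesis by (simp only: mult_ac)
  qed
  then show ?thesis unfolding poly_growth_def by blast
qed

lemma poly_growth_bounded:
  assumes "\<And>z. \<bar>f z\<bar> \<le> B"
  shows "poly_growth f"
proof -
  have "\<bar>f z\<bar> \<le> B * (1 + norm z ^ 0)" for z
    using assms[of z] abs_ge_zero[of "f z"] by simp
  then show ?thesis unfolding poly_growth_def by blast
qed

lemma poly_growth_const: "poly_growth (\<lambda>x. c)"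
  by (rule poly_growth_bounded[of _ "\<bar>c\<bar>"]) simp

lemma poly_growth_linear:
  assumes "bounded_linear f"
  shows "poly_growth (f :: _ \<Rightarrow> real)"
proof -
  obtain K where K: "\<And>x. norm (f x) \<le> norm x * K" "K > 0"
    using bounded_linear.pos_bounded[OF assms] by blast
  have "\<bar>f z\<bar> \<le> K * (1 + norm z ^ 1)" for z
    using K(1)[of z] K(2) by (simp add: algebra_simps)
  then show ?thesis unfolding poly_growth_def by blast
qed

lemma has_real_derivative_pd:
  assumes "f differentiable at z"
  shows "((\<lambda>t. f (z + t *\<^sub>R v)) has_real_derivative pd f v z) (at 0)"
proof -
  have "(\<lambda>t::real. z + t *\<^sub>R v) differentiable at 0"
    by (auto intro!: derivative_eq_intros simp: differentiable_def)
  with assms have "(\<lambda>t. f (z + t *\<^sub>R v)) differentiable at 0"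
    using differentiable_compose[of f "\<lambda>t::real. z + t *\<^sub>R v" 0] by simp
  then show ?thesis unfolding pd_def by (simp add: DERIV_deriv_iff_real_differentiable)
qed

lemma pd_add:
  "f differentiable at z \<Longrightarrow> g differentiable at z \<Longrightarrow>
    pd (\<lambda>x. f x + g x) v z = pd f v z + pd g v z"
  unfolding pd_def[of "\<lambda>x. f x + g x"]
  by (intro DERIV_imp_deriv DERIV_add has_real_derivative_pd)

lemma pd_mult:
  assumes "f differentiable at z" "g differentiable at z"
  shows "pd (\<lambda>x. f x * g x) v z = pd f v z * g z + f z * pd g v z"
proof -
  have "((\<lambda>t. f (z + t *\<^sub>R v) * g (z + t *\<^sub>R v)) has_real_derivative
      f (z + 0 *\<^sub>R v) * pd g v z + pd f v z * g (z + 0 *\<^sub>R v)) (at 0)"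
    by (rule DERIV_mult'[OF has_real_derivative_pd[OF assms(1)] has_real_derivative_pd[OF assms(2)]])
  then show ?thesis unfolding pd_def[of "\<lambda>x. f x * g x"] by (simp add: DERIV_imp_deriv add.commute)
qed

lemma pd_cmult: "f differentiable at z \<Longrightarrow> pd (\<lambda>x. c * f x) v z = c * pd f v z"
  unfolding pd_def[of "\<lambda>x. c * f x"]
  by (intro DERIV_imp_deriv DERIV_cmult has_real_derivative_pd)

lemma pd_const: "pd (\<lambda>x. c) v = (\<lambda>z. 0)"
  unfolding pd_def by simp

lemma pd_sum:
  "finite S \<Longrightarrow> (\<And>i. i \<in> S \<Longrightarrow> f i differentiable at z) \<Longrightarrow>
    pd (\<lambda>x. \<Sum>i\<in>S. f i x) v z = (\<Sum>i\<in>S. pd (f i) v z)"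
  unfolding pd_def[of "\<lambda>x. \<Sum>i\<in>S. f i x"]
  by (intro DERIV_imp_deriv DERIV_sum has_real_derivative_pd)

lemma pd_linear:
  assumes "bounded_linear l"
  shows "pd l v z = l v"
proof -
  interpret bounded_linear l by fact
  have "(\<lambda>t. l (z + t *\<^sub>R v)) = (\<lambda>t. l z + t * l v)"
    by (auto simp: add scale)
  moreover have "((\<lambda>t. l z + t * l v) has_real_derivative l v) (at 0)"
    by (auto intro!: derivative_eq_intros)
  ultimately show ?thesis unfolding pd_def by (simp add: DERIV_imp_deriv)
qed

lemma iter_dd_pd: "iter_dd (pd f v) vs = iter_dd f (vs @ [v])"
  by (induction vs) auto

lemma iter_dd_add:
  assumes "\<And>us z. length us < length vs \<Longrightarrow>
    iter_dd f us differentiable at z \<and> iter_dd g us differentiable at z"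
  shows "iter_dd (\<lambda>x. f x + g x) vs = (\<lambda>x. iter_dd f vs x + iter_dd g vs x)"
  using assms by (induction vs) (auto simp: pd_add)

lemma iter_dd_const: "iter_dd (\<lambda>x. c) vs = (\<lambda>x. if vs = [] then c else 0)"
  by (induction vs) (auto simp: pd_const)

lemma iter_dd_linear:
  assumes "bounded_linear l"
  shows "iter_dd l (v # vs) = (\<lambda>x. if vs = [] then l v else 0)"
  by (induction vs arbitrary: v) (auto simp: pd_linear[OF assms] pd_const)

lemma iter_dd_snd: "iter_dd (\<lambda>z. h (snd z)) vs = (\<lambda>z. iter_dd h (map snd vs) (snd z))"
  by (induction vs) (auto simp: pd_def)

section \<open>Test functions\<close>

lemma test_fun_iff:
  "test_fun f \<longleftrightarrow> (\<forall>vs z. iter_dd f vs differentiable at z) \<and> (\<forall>vs. poly_growth (iter_dd f vs))"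
  unfolding test_fun_def poly_growth_def by blast

lemma test_fun_imp_differentiable: "test_fun f \<Longrightarrow> f differentiable at z"
  unfolding test_fun_iff by (metis iter_dd.simps(1))

lemma test_fun_imp_poly_growth: "test_fun f \<Longrightarrow> poly_growth f"
  unfolding test_fun_iff by (metis iter_dd.simps(1))

lemma test_fun_pd: "test_fun f \<Longrightarrow> test_fun (pd f v)"
  unfolding test_fun_iff iter_dd_pd by blast

lemma test_fun_borel_measurable: "test_fun f \<Longrightarrow> f \<in> borel_measurable borel"
  by (intro borel_measurable_continuous_onI continuous_at_imp_continuous_on ballI
      differentiable_imp_continuous_within test_fun_imp_differentiable)

lemma test_fun_const: "test_fun (\<lambda>x. c)"
  unfolding test_fun_iff iter_dd_const by (auto simp: poly_growth_const)

lemma test_fun_add: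
  assumes "test_fun f" "test_fun g"
  shows "test_fun (\<lambda>x. f x + g x)"
proof -
  have "iter_dd (\<lambda>x. f x + g x) vs = (\<lambda>x. iter_dd f vs x + iter_dd g vs x)" for vs
    using assms by (intro iter_dd_add) (auto simp: test_fun_iff)
  then show ?thesis using assms by (auto simp: test_fun_iff intro: poly_growth_add)
qed

text \<open>By the Leibniz rule a derivative of order \<open>n + 1\<close> of \<open>f * g\<close> is one of order \<open>n\<close> of
  \<open>pd f v * g + f * pd g v\<close>, whose summands are again products of test functions.\<close>
lemma iter_dd_mult_differentiable_poly_growth:
  assumes "test_fun f" "test_fun g"
  shows "(\<forall>z. iter_dd (\<lambda>x. f x * g x) vs differentiable at z) \<and>
         poly_growth (iter_dd (\<lambda>x. f x * g x) vs)"
  using assms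
proof (induction "length vs" arbitrary: vs f g rule: less_induct)
  case less
  show ?case
  proof (cases vs rule: rev_cases)
    case Nil
    with less.prems show ?thesis
      by (auto intro: differentiable_mult poly_growth_mult test_fun_imp_differentiable
          test_fun_imp_poly_growth)
  next
    case (snoc ws v)
    have fv: "test_fun (pd f v)" and gv: "test_fun (pd g v)"
      using less.prems by (auto intro: test_fun_pd)
    have Leibniz: "pd (\<lambda>x. f x * g x) v = (\<lambda>x. pd f v x * g x + f x * pd g v x)"
      using less.prems by (auto simp: pd_mult test_fun_imp_differentiable)
    have "iter_dd (\<lambda>x. f x * g x) vs =
        (\<lambda>x. iter_dd (\<lambda>x. pd f v x * g x) ws x + iter_dd (\<lambda>x. f x * pd g v x) ws x)"
      unfolding snoc iter_dd_pd[symmetric] Leibniz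
    proof (rule iter_dd_add)
      fix us :: "'a list" and z
      assume "length us < length ws"
      then have "length us < length vs" by (simp add: snoc)
      with less.hyps less.prems fv gv
      show "iter_dd (\<lambda>x. pd f v x * g x) us differentiable at z \<and>
          iter_dd (\<lambda>x. f x * pd g v x) us differentiable at z" by blast
    qed
    with less.hyps[of ws] less.prems fv gv snoc show ?thesis
      by (auto intro: differentiable_add poly_growth_add)
  qed
qed

lemma test_fun_mult: "test_fun f \<Longrightarrow> test_fun g \<Longrightarrow> test_fun (\<lambda>x. f x * g x)"
  unfolding test_fun_iff[of "\<lambda>x. f x * g x"] using iter_dd_mult_differentiable_poly_growth by blast

lemma test_fun_cmult: "test_fun f \<Longrightarrow> test_fun (\<lambda>x. c * f x)"
  by (intro test_fun_mult test_fun_const)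

lemma test_fun_diff: "test_fun f \<Longrightarrow> test_fun g \<Longrightarrow> test_fun (\<lambda>x. f x - g x)"
  using test_fun_add[of f "\<lambda>x. -1 * g x"] test_fun_cmult[of g "-1"] by simp

lemma test_fun_uminus: "test_fun f \<Longrightarrow> test_fun (\<lambda>x. - f x)"
  using test_fun_cmult[of f "-1"] by simp

lemma test_fun_sum: "finite S \<Longrightarrow> (\<And>i. i \<in> S \<Longrightarrow> test_fun (f i)) \<Longrightarrow> test_fun (\<lambda>x. \<Sum>i\<in>S. f i x)"
  by (induction S rule: finite_induct) (auto intro: test_fun_add test_fun_const)

lemma test_fun_sum_list: "(\<And>i. i \<in> set is \<Longrightarrow> test_fun (f i)) \<Longrightarrow> test_fun (\<lambda>x. \<Sum>i\<leftarrow>is. f i x)"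
  by (induction "is") (auto intro: test_fun_add test_fun_const)

lemma test_fun_funpow:
  fixes A :: "('a::real_normed_vector \<Rightarrow> real) \<Rightarrow> ('a \<Rightarrow> real)"
  shows "(\<And>f. test_fun f \<Longrightarrow> test_fun (A f)) \<Longrightarrow> test_fun f \<Longrightarrow> test_fun ((A ^^ n) f)"
  by (induction n) auto

lemma test_fun_linear:
  assumes "bounded_linear l"
  shows "test_fun (l :: _ \<Rightarrow> real)"
  unfolding test_fun_iff
proof (intro conjI allI)
  fix vs z
  show "iter_dd l vs differentiable at z"
    using assms by (cases vs)
      (simp_all add: bounded_linear_imp_differentiable iter_dd_linear del: iter_dd.simps(2))
  show "poly_growth (iter_dd l vs)"
    using assms by (cases vs)
      (simp_all add: poly_growth_linear iter_dd_linear poly_growth_const del: iter_dd.simps(2))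
qed

lemma smooth_bdd_deriv_imp_differentiable: "smooth_bdd_deriv f \<Longrightarrow> f differentiable at x"
  unfolding smooth_bdd_deriv_def by (metis iter_dd.simps(1))

lemma test_fun_pd_snd:
  assumes "smooth_bdd_deriv V"
  shows "test_fun (\<lambda>z::'a::real_normed_vector \<times> 'b::real_normed_vector. pd V e (snd z))"
  unfolding test_fun_iff
proof (intro conjI allI)
  fix vs :: "('a \<times> 'b) list" and z :: "'a \<times> 'b"
  have "iter_dd V (map snd vs @ [e]) differentiable at (snd z)"
    using assms unfolding smooth_bdd_deriv_def by blast
  then show "iter_dd (\<lambda>z. pd V e (snd z)) vs differentiable at z"
    unfolding iter_dd_snd iter_dd_pd
    using differentiable_compose[of "iter_dd V (map snd vs @ [e])" snd z]
      bounded_linear_imp_differentiable[OF bounded_linear_snd] by blast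
  have "bounded (range (iter_dd V (map snd vs @ [e])))"
    using assms unfolding smooth_bdd_deriv_def by blast
  then obtain B where "\<forall>y. \<bar>iter_dd V (map snd vs @ [e]) y\<bar> \<le> B"
    unfolding bounded_real by blast
  then show "poly_growth (iter_dd (\<lambda>z. pd V e (snd z)) vs)"
    unfolding iter_dd_snd iter_dd_pd by (intro poly_growth_bounded) auto
qed

section \<open>The generators\<close>

definition test_linear :: "(('a::real_normed_vector \<Rightarrow> real) \<Rightarrow> ('a \<Rightarrow> real)) \<Rightarrow> bool" where
  "test_linear A \<longleftrightarrow> (\<forall>f. test_fun f \<longrightarrow> test_fun (A f)) \<and>
     (\<forall>f g. test_fun f \<longrightarrow> test_fun g \<longrightarrow> A (\<lambda>x. f x + g x) = (\<lambda>x. A f x + A g x)) \<and>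
     (\<forall>c f. test_fun f \<longrightarrow> A (\<lambda>x. c * f x) = (\<lambda>x. c * A f x))"

lemma test_linear_test_fun: "test_linear A \<Longrightarrow> test_fun f \<Longrightarrow> test_fun (A f)"
  unfolding test_linear_def by blast

lemma test_linear_add:
  "test_linear A \<Longrightarrow> test_fun f \<Longrightarrow> test_fun g \<Longrightarrow> A (\<lambda>x. f x + g x) = (\<lambda>x. A f x + A g x)"
  unfolding test_linear_def by blast

lemma test_linear_cmult:
  "test_linear A \<Longrightarrow> test_fun f \<Longrightarrow> A (\<lambda>x. c * f x) = (\<lambda>x. c * A f x)"
  unfolding test_linear_def by blast

lemma test_linear_zero:
  assumes "test_linear A"
  shows "A (\<lambda>x. 0) = (\<lambda>x. 0)"
  using test_linear_cmult[OF assms test_fun_const, of 0 0] by simp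

lemma test_linear_sum:
  assumes "test_linear A" "finite S" "\<And>i. i \<in> S \<Longrightarrow> test_fun (f i)"
  shows "A (\<lambda>x. \<Sum>i\<in>S. f i x) = (\<lambda>x. \<Sum>i\<in>S. A (f i) x)"
  using assms(2,3)
  by (induction S rule: finite_induct)
    (simp_all add: test_linear_zero[OF assms(1)] test_linear_add[OF assms(1)] test_fun_sum)

lemma test_linear_sum_list:
  assumes "test_linear A" "\<And>i. i \<in> set is \<Longrightarrow> test_fun (f i)"
  shows "A (\<lambda>x. \<Sum>i\<leftarrow>is. f i x) = (\<lambda>x. \<Sum>i\<leftarrow>is. A (f i) x)"
  using assms(2)
  by (induction "is")
    (simp_all add: test_linear_zero[OF assms(1)] test_linear_add[OF assms(1)] test_fun_sum_list)

lemma Lop_eq: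
  "Lop V a c Minv \<phi> = (\<lambda>z.
       - (\<Sum>j\<in>UNIV. pd V (axis j 1) (snd z) * pd \<phi> (er j) z)
       + a * (\<Sum>j\<in>UNIV. (Minv *v fst z) $ j * pd \<phi> (eth j) z)
       - c * (\<Sum>j\<in>UNIV. (Minv *v fst z) $ j * pd \<phi> (er j) z)
       + c * (\<Sum>j\<in>UNIV. pd (pd \<phi> (er j)) (er j) z))"
  by (rule ext) (simp add: Lop_def Let_def)

lemma test_fun_Lop:
  fixes Minv :: "real^'d^'d" and \<phi> :: "'d::finite phase \<Rightarrow> real"
  assumes V: "smooth_bdd_deriv V" and \<phi>: "test_fun \<phi>"
  shows "test_fun (Lop V a c Minv \<phi>)"
proof -
  have "bounded_linear (\<lambda>z::'d::finite phase. (Minv *v fst z) $ j)" for j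
    by (intro bounded_linear_compose[OF bounded_linear_vec_nth]
        bounded_linear_compose[OF matrix_vector_mul_bounded_linear] bounded_linear_fst)
  then have "test_fun (\<lambda>z::'d phase. (Minv *v fst z) $ j)" for j
    by (rule test_fun_linear)
  then show ?thesis
    unfolding Lop_eq using test_fun_pd_snd[OF V] test_fun_pd[OF \<phi>] test_fun_pd[OF test_fun_pd[OF \<phi>]]
    by (intro test_fun_add test_fun_diff test_fun_uminus test_fun_cmult test_fun_sum test_fun_mult) auto
qed

lemma test_linear_Lop:
  fixes Minv :: "real^'d::finite^'d"
  assumes "smooth_bdd_deriv V"
  shows "test_linear (Lop V a c Minv)"
  unfolding test_linear_def
proof (intro conjI allI impI)
  fix f g :: "'d phase \<Rightarrow> real" and k :: real
  show "test_fun f \<Longrightarrow> test_fun (Lop V a c Minv f)" using assms by (rule test_fun_Lop)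
  have pd_cmult_fun: "pd (\<lambda>x. k * f x) v = (\<lambda>z. k * pd f v z)" if "test_fun f" for f v
    using that by (intro ext) (simp add: pd_cmult test_fun_imp_differentiable)
  have pd_add_fun: "pd (\<lambda>x. f x + g x) v = (\<lambda>z. pd f v z + pd g v z)"
    if "test_fun f" "test_fun g" for f g v
    using that by (intro ext) (simp add: pd_add test_fun_imp_differentiable)
  assume f: "test_fun f"
  show "Lop V a c Minv (\<lambda>x. k * f x) = (\<lambda>x. k * Lop V a c Minv f x)"
    unfolding Lop_eq pd_cmult_fun[OF f] pd_cmult_fun[OF test_fun_pd[OF f]]
    by (simp add: sum_distrib_left algebra_simps)
  assume g: "test_fun g"
  show "Lop V a c Minv (\<lambda>x. f x + g x) = (\<lambda>x. Lop V a c Minv f x + Lop V a c Minv g x)"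
    unfolding Lop_eq pd_add_fun[OF f g] pd_add_fun[OF test_fun_pd[OF f] test_fun_pd[OF g]]
    by (simp add: sum.distrib algebra_simps)
qed

lemma Lop_sum_potentials:
  fixes U :: "'i \<Rightarrow> real^'d \<Rightarrow> real" and Minv :: "real^'d::finite^'d"
  assumes "finite S" "S \<noteq> {}" "\<And>i \<theta>. i \<in> S \<Longrightarrow> U i differentiable at \<theta>"
  shows "Lop (\<lambda>\<theta>. \<Sum>i\<in>S. U i \<theta>) a c Minv =
         (\<lambda>\<phi> z. \<Sum>i\<in>S. Lop (U i) (a / card S) (c / card S) Minv \<phi> z)"
proof (intro ext)
  fix \<phi> :: "'d phase \<Rightarrow> real" and z :: "'d phase"
  define n where "n = real (card S)"
  have n: "n > 0" using assms by (simp add: n_def card_gt_0_iff)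
  have pdU: "pd (\<lambda>\<theta>. \<Sum>i\<in>S. U i \<theta>) v \<theta> = (\<Sum>i\<in>S. pd (U i) v \<theta>)" for v \<theta>
    using assms by (intro pd_sum) auto
  define A where "A = (\<Sum>j\<in>UNIV. (Minv *v fst z) $ j * pd \<phi> (eth j) z)"
  define B where "B = (\<Sum>j\<in>UNIV. (Minv *v fst z) $ j * pd \<phi> (er j) z)"
  define D where "D = (\<Sum>j\<in>UNIV. pd (pd \<phi> (er j)) (er j) z)"
  define P where "P i = (\<Sum>j\<in>UNIV. pd (U i) (axis j 1) (snd z) * pd \<phi> (er j) z)" for i
  have "Lop (\<lambda>\<theta>. \<Sum>i\<in>S. U i \<theta>) a c Minv \<phi> z = - (\<Sum>i\<in>S. P i) + a * A - c * B + c * D"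
    unfolding Lop_eq pdU A_def B_def D_def P_def
    by (simp add: sum_distrib_right sum.swap[of _ S UNIV])
  also have "\<dots> = - (\<Sum>i\<in>S. P i) + n * (a / n * A - c / n * B + c / n * D)"
    using n by (simp add: algebra_simps)
  also have "\<dots> = (\<Sum>i\<in>S. - P i + (a / n * A - c / n * B + c / n * D))"
    by (simp only: sum.distrib sum_negf sum_constant n_def distrib_left)
  also have "\<dots> = (\<Sum>i\<in>S. Lop (U i) (a / card S) (c / card S) Minv \<phi> z)"
    unfolding Lop_eq A_def B_def D_def P_def n_def by (simp add: algebra_simps)
  finally show "Lop (\<lambda>\<theta>. \<Sum>i\<in>S. U i \<theta>) a c Minv \<phi> z =
      (\<Sum>i\<in>S. Lop (U i) (a / card S) (c / card S) Minv \<phi> z)" .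
qed

section \<open>Weak error bounds\<close>

lemma weak_O_iff_eventually:
  "weak_O R g \<longleftrightarrow>
     (\<exists>Cc q. \<forall>\<^sub>F \<eta> in at_right 0. \<forall>z. \<bar>R \<eta> z\<bar> \<le> Cc * (1 + norm z ^ q) * g \<eta>)"
proof
  assume "weak_O R g"
  then obtain Cc q \<eta>0 where "\<eta>0 > 0" "\<forall>\<eta>\<in>{0<..\<eta>0}. \<forall>z. \<bar>R \<eta> z\<bar> \<le> Cc * (1 + norm z ^ q) * g \<eta>"
    unfolding weak_O_def by blast
  then show "\<exists>Cc q. \<forall>\<^sub>F \<eta> in at_right 0. \<forall>z. \<bar>R \<eta> z\<bar> \<le> Cc * (1 + norm z ^ q) * g \<eta>"
    unfolding eventually_at_right_field by force
next
  assume "\<exists>Cc q. \<forall>\<^sub>F \<eta> in at_right 0. \<forall>z. \<bar>R \<eta> z\<bar> \<le> Cc * (1 + norm z ^ q) * g \<eta>"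
  then obtain Cc q b where "b > 0" "\<forall>\<eta>>0. \<eta> < b \<longrightarrow> (\<forall>z. \<bar>R \<eta> z\<bar> \<le> Cc * (1 + norm z ^ q) * g \<eta>)"
    unfolding eventually_at_right_field by blast
  then show "weak_O R g"
    unfolding weak_O_def by (intro exI[of _ Cc] exI[of _ q] exI[of _ "b / 2"]) auto
qed

lemma eventually_at_right_0_unit_interval: "\<forall>\<^sub>F \<eta> in at_right (0::real). 0 < \<eta> \<and> \<eta> < 1"
  unfolding eventually_at_right_field by (intro exI[of _ 1]) auto

lemma weak_O_eventually_cong:
  assumes "weak_O R g" "\<forall>\<^sub>F \<eta> in at_right 0. \<forall>z. R \<eta> z = R' \<eta> z"
  shows "weak_O R' g"
proof -
  obtain C q where "\<forall>\<^sub>F \<eta> in at_right 0. \<forall>z. \<bar>R \<eta> z\<bar> \<le> C * (1 + norm z ^ q) * g \<eta>"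
    using assms(1) unfolding weak_O_iff_eventually by blast
  with assms(2) have "\<forall>\<^sub>F \<eta> in at_right 0. \<forall>z. \<bar>R' \<eta> z\<bar> \<le> C * (1 + norm z ^ q) * g \<eta>"
    by eventually_elim simp
  then show ?thesis unfolding weak_O_iff_eventually by blast
qed

lemma poly_bound_raise:
  fixes r C g :: real and z :: "'a::real_normed_vector"
  assumes "\<bar>r\<bar> \<le> C * (1 + norm z ^ q) * g" "q \<le> q'"
  shows "\<bar>r\<bar> \<le> (2 * C) * (1 + norm z ^ q') * g"
proof -
  have "0 \<le> C * g"
    using poly_bound_coeff_nonneg[of "\<lambda>_. r" z "C * g" q] assms(1) by (simp add: mult_ac)
  then have "(C * g) * (1 + norm z ^ q) \<le> (C * g) * (2 * (1 + norm z ^ q'))"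
    using assms(2) by (intro mult_left_mono poly_weight_le)
  with assms(1) show ?thesis by (simp add: mult_ac)
qed

lemma weak_O_add:
  assumes "weak_O R1 g" "weak_O R2 g"
  shows "weak_O (\<lambda>\<eta> z. R1 \<eta> z + R2 \<eta> z) g"
proof -
  obtain C1 q1 C2 q2 where
    "\<forall>\<^sub>F \<eta> in at_right 0. \<forall>z. \<bar>R1 \<eta> z\<bar> \<le> C1 * (1 + norm z ^ q1) * g \<eta>"
    "\<forall>\<^sub>F \<eta> in at_right 0. \<forall>z. \<bar>R2 \<eta> z\<bar> \<le> C2 * (1 + norm z ^ q2) * g \<eta>"
    using assms unfolding weak_O_iff_eventually by blast
  then have "\<forall>\<^sub>F \<eta> in at_right 0. \<forall>z.
      \<bar>R1 \<eta> z + R2 \<eta> z\<bar> \<le> (2 * C1 + 2 * C2) * (1 + norm z ^ (q1 + q2)) * g \<eta>"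
  proof eventually_elim
    case (elim \<eta>)
    show ?case
    proof
      fix z
      have "\<bar>R1 \<eta> z\<bar> \<le> (2 * C1) * (1 + norm z ^ (q1 + q2)) * g \<eta>"
        "\<bar>R2 \<eta> z\<bar> \<le> (2 * C2) * (1 + norm z ^ (q1 + q2)) * g \<eta>"
        using elim by (auto intro: poly_bound_raise)
      then show "\<bar>R1 \<eta> z + R2 \<eta> z\<bar> \<le> (2 * C1 + 2 * C2) * (1 + norm z ^ (q1 + q2)) * g \<eta>"
        by (simp add: algebra_simps abs_triangle_ineq[THEN order_trans])
    qed
  qed
  then show ?thesis unfolding weak_O_iff_eventually by blast
qed

lemma weak_O_cmult:
  assumes "weak_O R g"
  shows "weak_O (\<lambda>\<eta> z. c * R \<eta> z) g"
proof -
  obtain C q where "\<forall>\<^sub>F \<eta> in at_right 0. \<forall>z. \<bar>R \<eta> z\<bar> \<le> C * (1 + norm z ^ q) * g \<eta>"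
    using assms unfolding weak_O_iff_eventually by blast
  then have "\<forall>\<^sub>F \<eta> in at_right 0. \<forall>z. \<bar>c * R \<eta> z\<bar> \<le> (\<bar>c\<bar> * C) * (1 + norm z ^ q) * g \<eta>"
    by eventually_elim (simp add: abs_mult mult.assoc mult_left_mono)
  then show ?thesis unfolding weak_O_iff_eventually by blast
qed

lemma weak_O_zero: "weak_O (\<lambda>\<eta> z. 0) g"
  unfolding weak_O_iff_eventually by (intro exI[of _ 0]) simp

lemma weak_O_sum:
  "finite S \<Longrightarrow> (\<And>i. i \<in> S \<Longrightarrow> weak_O (R i) g) \<Longrightarrow> weak_O (\<lambda>\<eta> z. \<Sum>i\<in>S. R i \<eta> z) g"
  by (induction S rule: finite_induct) (auto intro: weak_O_zero weak_O_add)

lemma weak_O_mono: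
  assumes "weak_O R g" "\<forall>\<^sub>F \<eta> in at_right 0. 0 \<le> g \<eta> \<and> g \<eta> \<le> h \<eta>"
  shows "weak_O R h"
proof -
  obtain C q where "\<forall>\<^sub>F \<eta> in at_right 0. \<forall>z. \<bar>R \<eta> z\<bar> \<le> C * (1 + norm z ^ q) * g \<eta>"
    using assms unfolding weak_O_iff_eventually by blast
  with assms(2) have "\<forall>\<^sub>F \<eta> in at_right 0. \<forall>z. \<bar>R \<eta> z\<bar> \<le> \<bar>C\<bar> * (1 + norm z ^ q) * h \<eta>"
  proof eventually_elim
    case (elim \<eta>)
    have "C * (1 + norm z ^ q) * g \<eta> \<le> \<bar>C\<bar> * (1 + norm z ^ q) * h \<eta>" for z
      using elim(1) by (intro mult_mono) (auto intro: mult_right_mono)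
    with elim(2) show ?case by (meson order_trans)
  qed
  then show ?thesis unfolding weak_O_iff_eventually by blast
qed

lemma weak_O_power_mono:
  assumes "weak_O R (\<lambda>\<eta>. \<eta> ^ a)" "m \<le> a"
  shows "weak_O R (\<lambda>\<eta>. \<eta> ^ m)"
proof (rule weak_O_mono[OF assms(1)])
  show "\<forall>\<^sub>F \<eta> in at_right 0. 0 \<le> \<eta> ^ a \<and> \<eta> ^ a \<le> (\<eta>::real) ^ m"
    using eventually_at_right_0_unit_interval
    by eventually_elim (simp add: assms(2) power_decreasing)
qed

lemma weak_O_mult_power:
  assumes "weak_O R (\<lambda>\<eta>. \<eta> ^ p)"
  shows "weak_O (\<lambda>\<eta> z. \<eta> ^ k * R \<eta> z) (\<lambda>\<eta>. \<eta> ^ (k + p))"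
proof -
  obtain C q where "\<forall>\<^sub>F \<eta> in at_right 0. \<forall>z. \<bar>R \<eta> z\<bar> \<le> C * (1 + norm z ^ q) * \<eta> ^ p"
    using assms unfolding weak_O_iff_eventually by blast
  with eventually_at_right_0_unit_interval
  have "\<forall>\<^sub>F \<eta> in at_right 0. \<forall>z. \<bar>\<eta> ^ k * R \<eta> z\<bar> \<le> C * (1 + norm z ^ q) * \<eta> ^ (k + p)"
  proof eventually_elim
    case (elim \<eta>)
    have "\<eta> ^ k * \<bar>R \<eta> z\<bar> \<le> \<eta> ^ k * (C * (1 + norm z ^ q) * \<eta> ^ p)" for z
      using elim by (intro mult_left_mono) auto
    with elim(1) show ?case by (simp add: abs_mult power_add mult_ac)
  qed
  then show ?thesis unfolding weak_O_iff_eventually by blast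
qed

lemma weak_O_poly_growth: "poly_growth f \<Longrightarrow> weak_O (\<lambda>\<eta>. f) (\<lambda>\<eta>. 1)"
  unfolding poly_growth_def weak_O_iff_eventually by auto

lemma weak_O_power_poly_growth:
  assumes "poly_growth f" "m \<le> a"
  shows "weak_O (\<lambda>\<eta> z. \<eta> ^ a * f z) (\<lambda>\<eta>. \<eta> ^ m)"
  using weak_O_mult_power[of "\<lambda>\<eta>. f" 0 a] weak_O_poly_growth[OF assms(1)] assms(2)
  by (auto intro: weak_O_power_mono)

section \<open>Markov kernels with polynomial moments\<close>

lemma
  assumes G: "G \<in> borel_measurable M" and fin: "(\<integral>\<^sup>+x. G x \<partial>M) < \<infinity>"
  shows integrable_enn2real: "integrable M (\<lambda>x. enn2real (G x))"
    and integral_enn2real: "(\<integral>x. enn2real (G x) \<partial>M) = enn2real (\<integral>\<^sup>+x. G x \<partial>M)"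
proof -
  have "AE x in M. G x \<noteq> \<infinity>" using nn_integral_PInf_AE[OF G] fin by simp
  then have eq: "(\<integral>\<^sup>+x. ennreal (enn2real (G x)) \<partial>M) = (\<integral>\<^sup>+x. G x \<partial>M)"
    by (intro nn_integral_cong_AE) (auto simp: less_top)
  have m: "(\<lambda>x. enn2real (G x)) \<in> borel_measurable M" using G by measurable
  show "integrable M (\<lambda>x. enn2real (G x))"
    by (rule integrableI_nonneg) (use m eq fin in auto)
  show "(\<integral>x. enn2real (G x) \<partial>M) = enn2real (\<integral>\<^sup>+x. G x \<partial>M)"
    by (subst integral_eq_nn_integral) (use m eq in auto)
qed

text \<open>The library's \<open>integral_bind\<close> needs a bounded integrand; splitting \<open>f\<close> into its
  positive and negative parts reduces the integrable case to \<open>nn_integral_bind\<close>.\<close>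
lemma integral_bind_integrable:
  fixes f :: "'b \<Rightarrow> real"
  assumes N: "N \<in> M \<rightarrow>\<^sub>M subprob_algebra K" and f: "f \<in> borel_measurable K"
    and int: "integrable (M \<bind> N) f" and intN: "\<And>x. x \<in> space M \<Longrightarrow> integrable (N x) f"
  shows "integral\<^sup>L (M \<bind> N) f = (\<integral>x. integral\<^sup>L (N x) f \<partial>M)"
proof -
  define Gp where "Gp x = (\<integral>\<^sup>+y. ennreal (f y) \<partial>N x)" for x
  define Gm where "Gm x = (\<integral>\<^sup>+y. ennreal (- f y) \<partial>N x)" for x
  have mp: "Gp \<in> borel_measurable M" unfolding Gp_def
    by (rule measurable_compose[OF N nn_integral_measurable_subprob_algebra]) (use f in measurable)
  have mm: "Gm \<in> borel_measurable M" unfolding Gm_def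
    by (rule measurable_compose[OF N nn_integral_measurable_subprob_algebra]) (use f in measurable)
  have fp: "(\<integral>\<^sup>+y. ennreal (f y) \<partial>(M \<bind> N)) = (\<integral>\<^sup>+x. Gp x \<partial>M)"
    and fm: "(\<integral>\<^sup>+y. ennreal (- f y) \<partial>(M \<bind> N)) = (\<integral>\<^sup>+x. Gm x \<partial>M)"
    unfolding Gp_def Gm_def by (rule nn_integral_bind[OF _ N]; use f in measurable)+
  have "(\<integral>\<^sup>+y. ennreal (f y) \<partial>(M \<bind> N)) < \<infinity>" "(\<integral>\<^sup>+y. ennreal (- f y) \<partial>(M \<bind> N)) < \<infinity>"
    using int unfolding integrable_iff_bounded
    by (auto intro!: le_less_trans[OF nn_integral_mono, of _ _ "\<lambda>y. ennreal \<bar>f y\<bar>"])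
  then have finp: "(\<integral>\<^sup>+x. Gp x \<partial>M) < \<infinity>" and finm: "(\<integral>\<^sup>+x. Gm x \<partial>M) < \<infinity>"
    using fp fm by simp_all
  have "integral\<^sup>L (M \<bind> N) f = enn2real (\<integral>\<^sup>+x. Gp x \<partial>M) - enn2real (\<integral>\<^sup>+x. Gm x \<partial>M)"
    using real_lebesgue_integral_def[OF int] fp fm by simp
  also have "\<dots> = (\<integral>x. enn2real (Gp x) - enn2real (Gm x) \<partial>M)"
    using integral_enn2real[OF mp finp] integral_enn2real[OF mm finm]
      integrable_enn2real[OF mp finp] integrable_enn2real[OF mm finm] by simp
  also have "\<dots> = (\<integral>x. integral\<^sup>L (N x) f \<partial>M)"
    unfolding Gp_def Gm_def using intN
    by (intro Bochner_Integration.integral_cong) (simp_all add: real_lebesgue_integral_def)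
  finally show ?thesis .
qed

lemma prob_kernel_apply:
  assumes "k \<in> borel \<rightarrow>\<^sub>M prob_algebra borel"
  shows "prob_space (k z)" and "sets (k z) = sets borel"
  using measurable_space[OF assms, of z] by (auto simp: space_prob_algebra)

lemma measurable_run:
  "(\<And>i. i \<in> set is \<Longrightarrow> k i \<in> borel \<rightarrow>\<^sub>M prob_algebra borel) \<Longrightarrow>
    run k is \<in> borel \<rightarrow>\<^sub>M prob_algebra borel"
proof (induction "is")
  case Nil
  show ?case by (simp add: measurable_return_prob_space)
next
  case (Cons i "is")
  then show ?case
    by (simp add: measurable_bind_prob_space[of "k i" borel borel "run k is" borel])
qed

definition moment_bounded :: "(real \<Rightarrow> 'a::real_normed_vector \<Rightarrow> 'a measure) \<Rightarrow> bool" where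
  "moment_bounded k \<longleftrightarrow> (\<forall>\<eta>>0. k \<eta> \<in> borel \<rightarrow>\<^sub>M prob_algebra borel) \<and>
     (\<forall>q. \<exists>B\<ge>0. \<forall>\<^sub>F \<eta> in at_right 0. \<forall>z.
        (\<integral>\<^sup>+y. ennreal (1 + norm y ^ q) \<partial>k \<eta> z) \<le> ennreal (B * (1 + norm z ^ q)))"

lemma moment_boundedD:
  assumes "moment_bounded k"
  shows "\<eta> > 0 \<Longrightarrow> k \<eta> \<in> borel \<rightarrow>\<^sub>M prob_algebra borel"
    and "\<exists>B\<ge>0. \<forall>\<^sub>F \<eta> in at_right 0. \<forall>z.
           (\<integral>\<^sup>+y. ennreal (1 + norm y ^ q) \<partial>k \<eta> z) \<le> ennreal (B * (1 + norm z ^ q))"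
  using assms unfolding moment_bounded_def by blast+

lemma moment_bounded_return: "moment_bounded (\<lambda>\<eta> z. return borel z)"
  unfolding moment_bounded_def
  by (intro conjI allI impI exI[of _ 1]) (simp_all add: measurable_return_prob_space nn_integral_return)

lemma nn_integral_bind_le:
  assumes M: "sets M = sets borel" and N: "N \<in> borel \<rightarrow>\<^sub>M subprob_algebra borel"
    and w: "w \<in> borel_measurable borel"
    and "\<And>x. (\<integral>\<^sup>+y. w y \<partial>N x) \<le> c * w x" and "(\<integral>\<^sup>+x. w x \<partial>M) \<le> C"
  shows "(\<integral>\<^sup>+y. w y \<partial>(M \<bind> N)) \<le> c * C"
proof -
  have "N \<in> M \<rightarrow>\<^sub>M subprob_algebra borel" and wM: "w \<in> borel_measurable M"
    using N w unfolding measurable_cong_sets[OF M refl] .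
  then have "(\<integral>\<^sup>+y. w y \<partial>(M \<bind> N)) = (\<integral>\<^sup>+x. (\<integral>\<^sup>+y. w y \<partial>N x) \<partial>M)"
    by (intro nn_integral_bind[OF w])
  also have "\<dots> \<le> (\<integral>\<^sup>+x. c * w x \<partial>M)"
    using assms(4) by (rule nn_integral_mono)
  also have "\<dots> = c * (\<integral>\<^sup>+x. w x \<partial>M)"
    using wM by (rule nn_integral_cmult)
  also have "\<dots> \<le> c * C" using assms(5) by (rule mult_left_mono) simp
  finally show ?thesis .
qed

lemma moment_bounded_bind:
  assumes k: "moment_bounded k" and l: "moment_bounded l"
  shows "moment_bounded (\<lambda>\<eta> z. k \<eta> z \<bind> l \<eta>)"
  unfolding moment_bounded_def
proof (intro conjI allI impI)
  fix \<eta> :: real assume "\<eta> > 0"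
  then show "(\<lambda>z. k \<eta> z \<bind> l \<eta>) \<in> borel \<rightarrow>\<^sub>M prob_algebra borel"
    using moment_boundedD(1)[OF k] moment_boundedD(1)[OF l]
    by (intro measurable_bind_prob_space[of "k \<eta>" borel borel "l \<eta>" borel])
next
  fix q
  define w where "w y = ennreal (1 + norm y ^ q)" for y :: 'a
  obtain Bk where "Bk \<ge> 0" and Bk: "\<forall>\<^sub>F \<eta> in at_right 0. \<forall>z. (\<integral>\<^sup>+y. w y \<partial>k \<eta> z) \<le> ennreal (Bk * (1 + norm z ^ q))"
    using moment_boundedD(2)[OF k] unfolding w_def by blast
  obtain Bl where "Bl \<ge> 0"
    and Bl: "\<forall>\<^sub>F \<eta> in at_right 0. \<forall>z. (\<integral>\<^sup>+y. w y \<partial>l \<eta> z) \<le> ennreal (Bl * (1 + norm z ^ q))"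
    using moment_boundedD(2)[OF l] unfolding w_def by blast
  have "\<forall>\<^sub>F \<eta> in at_right 0. \<forall>z. (\<integral>\<^sup>+y. w y \<partial>(k \<eta> z \<bind> l \<eta>)) \<le> ennreal (Bl * Bk * (1 + norm z ^ q))"
    using eventually_at_right_0_unit_interval Bk Bl
  proof eventually_elim
    case (elim \<eta>)
    have "(\<integral>\<^sup>+y. w y \<partial>l \<eta> x) \<le> ennreal Bl * w x" for x
      using elim(3) \<open>Bl \<ge> 0\<close> by (simp add: w_def ennreal_mult')
    with elim moment_boundedD(1)[OF k] moment_boundedD(1)[OF l] \<open>Bl \<ge> 0\<close>
    show ?case
      by (auto intro!: nn_integral_bind_le prob_kernel_apply measurable_prob_algebraD
          simp: w_def ennreal_mult' mult.assoc)
  qed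
  with \<open>Bk \<ge> 0\<close> \<open>Bl \<ge> 0\<close> show "\<exists>B\<ge>0. \<forall>\<^sub>F \<eta> in at_right 0. \<forall>z.
      (\<integral>\<^sup>+y. ennreal (1 + norm y ^ q) \<partial>(k \<eta> z \<bind> l \<eta>)) \<le> ennreal (B * (1 + norm z ^ q))"
    unfolding w_def by (intro exI[of _ "Bl * Bk"]) simp
qed

lemma moment_bounded_run:
  "(\<And>i. i \<in> set is \<Longrightarrow> moment_bounded (\<psi> i)) \<Longrightarrow> moment_bounded (\<lambda>\<eta>. run (\<lambda>i. \<psi> i \<eta>) is)"
proof (induction "is")
  case Nil
  then show ?case by (simp add: moment_bounded_return)
next
  case (Cons i "is")
  then show ?case using moment_bounded_bind[of "\<psi> i" "\<lambda>\<eta>. run (\<lambda>i. \<psi> i \<eta>) is"] by simp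
qed

lemma
  fixes f :: "'a::real_normed_vector \<Rightarrow> real"
  assumes M: "sets M = sets borel" and f: "f \<in> borel_measurable borel"
    and bound: "\<And>y. \<bar>f y\<bar> \<le> Bf * (1 + norm y ^ q)" and "0 \<le> Bf" "0 \<le> Cm"
    and mom: "(\<integral>\<^sup>+y. ennreal (1 + norm y ^ q) \<partial>M) \<le> ennreal Cm"
  shows integrable_poly_bounded: "integrable M f"
    and abs_integral_poly_bounded: "\<bar>\<integral>y. f y \<partial>M\<bar> \<le> Bf * Cm"
proof -
  have "(\<integral>\<^sup>+y. ennreal (norm (f y)) \<partial>M) \<le> (\<integral>\<^sup>+y. ennreal Bf * ennreal (1 + norm y ^ q) \<partial>M)"
  proof (rule nn_integral_mono)
    fix y
    have "ennreal (norm (f y)) \<le> ennreal (Bf * (1 + norm y ^ q))"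
      using bound[of y] by (intro ennreal_leI) simp
    also have "\<dots> = ennreal Bf * ennreal (1 + norm y ^ q)"
      using \<open>0 \<le> Bf\<close> by (rule ennreal_mult')
    finally show "ennreal (norm (f y)) \<le> ennreal Bf * ennreal (1 + norm y ^ q)" .
  qed
  also have "\<dots> = ennreal Bf * (\<integral>\<^sup>+y. ennreal (1 + norm y ^ q) \<partial>M)"
    by (rule nn_integral_cmult) (simp add: measurable_cong_sets[OF M refl])
  also have "\<dots> \<le> ennreal (Bf * Cm)"
    using mom \<open>0 \<le> Bf\<close> by (simp add: ennreal_mult' mult_left_mono)
  finally have le: "(\<integral>\<^sup>+y. ennreal (norm (f y)) \<partial>M) \<le> ennreal (Bf * Cm)" .
  then show int: "integrable M f"
    using f by (intro integrableI_bounded) (auto simp: measurable_cong_sets[OF M refl] top_unique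
      intro: le_less_trans)
  have "ennreal (norm (\<integral>y. f y \<partial>M)) \<le> ennreal (Bf * Cm)"
    using integral_norm_bound_ennreal[OF int] le by (rule order_trans)
  then show "\<bar>\<integral>y. f y \<partial>M\<bar> \<le> Bf * Cm"
    using \<open>0 \<le> Bf\<close> \<open>0 \<le> Cm\<close> by (simp add: ennreal_le_iff)
qed

lemma
  assumes k: "moment_bounded k" and R: "\<And>\<eta>. \<eta> > 0 \<Longrightarrow> R \<eta> \<in> borel_measurable borel"
    and "weak_O R g"
  shows moment_bounded_integrable: "\<forall>\<^sub>F \<eta> in at_right 0. \<forall>z. integrable (k \<eta> z) (R \<eta>)"
    and weak_O_integral: "weak_O (\<lambda>\<eta> z. \<integral>y. R \<eta> y \<partial>k \<eta> z) g"
proof -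
  obtain C q where bound: "\<forall>\<^sub>F \<eta> in at_right 0. \<forall>y. \<bar>R \<eta> y\<bar> \<le> C * (1 + norm y ^ q) * g \<eta>"
    using \<open>weak_O R g\<close> unfolding weak_O_iff_eventually by blast
  obtain B where "B \<ge> 0" and mom: "\<forall>\<^sub>F \<eta> in at_right 0. \<forall>z.
      (\<integral>\<^sup>+y. ennreal (1 + norm y ^ q) \<partial>k \<eta> z) \<le> ennreal (B * (1 + norm z ^ q))"
    using moment_boundedD(2)[OF k] by blast
  have "\<forall>\<^sub>F \<eta> in at_right 0. \<forall>z. integrable (k \<eta> z) (R \<eta>) \<and>
      \<bar>\<integral>y. R \<eta> y \<partial>k \<eta> z\<bar> \<le> (C * B) * (1 + norm z ^ q) * g \<eta>"
    using eventually_at_right_0_unit_interval bound mom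
  proof eventually_elim
    case (elim \<eta>)
    then have bound\<eta>: "\<bar>R \<eta> y\<bar> \<le> (C * g \<eta>) * (1 + norm y ^ q)" for y
      by (simp add: mult_ac)
    have "0 \<le> C * g \<eta>" using bound\<eta> by (rule poly_bound_coeff_nonneg)
    show ?case
    proof
      fix z
      have sets: "sets (k \<eta> z) = sets borel"
        using elim(1) by (intro prob_kernel_apply moment_boundedD(1)[OF k]) simp
      have "0 \<le> B * (1 + norm z ^ q)" using \<open>B \<ge> 0\<close> by simp
      note poly_bounded = sets R bound\<eta> \<open>0 \<le> C * g \<eta>\<close> this elim(3)[rule_format, of z]
      show "integrable (k \<eta> z) (R \<eta>) \<and>
          \<bar>\<integral>y. R \<eta> y \<partial>k \<eta> z\<bar> \<le> (C * B) * (1 + norm z ^ q) * g \<eta>"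
        using integrable_poly_bounded[OF poly_bounded] abs_integral_poly_bounded[OF poly_bounded]
          elim(1) by (simp add: mult_ac)
    qed
  qed
  then show "\<forall>\<^sub>F \<eta> in at_right 0. \<forall>z. integrable (k \<eta> z) (R \<eta>)"
    and "weak_O (\<lambda>\<eta> z. \<integral>y. R \<eta> y \<partial>k \<eta> z) g"
    unfolding weak_O_iff_eventually by (force elim: eventually_mono)+
qed

lemma power_add_le:
  fixes a b :: real
  assumes "0 \<le> a" "0 \<le> b"
  shows "(a + b) ^ q \<le> 2 ^ q * (a ^ q + b ^ q)"
proof -
  have "(a + b) ^ q \<le> (2 * max a b) ^ q" using assms by (intro power_mono) auto
  also have "\<dots> = 2 ^ q * max a b ^ q" by (simp add: power_mult_distrib)
  also have "max a b ^ q \<le> a ^ q + b ^ q" using assms by (cases "a \<le> b") (auto simp: max_def)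
  then have "2 ^ q * max a b ^ q \<le> 2 ^ q * (a ^ q + b ^ q)" by simp
  finally show ?thesis .
qed

text \<open>With \<open>a = \<parallel>z0\<parallel>\<close>, \<open>b = \<parallel>z1 - z0\<parallel>\<close>, \<open>n1 = \<parallel>z1\<parallel>\<close> and \<open>t = \<surd>\<eta>\<close>, this bounds the
  polynomial weight after one step by the weight before it times the normalised
  displacement that \<open>good_step\<close> controls.\<close>
lemma poly_weight_le_displacement:
  fixes a b n1 t :: real
  assumes a: "0 \<le> a" and b: "0 \<le> b" and n1: "0 \<le> n1" "n1 \<le> a + b" and t: "0 < t" "t \<le> 1"
  shows "1 + n1 ^ q \<le> (1 + a ^ q) * (1 + 2 ^ q + 4 ^ q * (b / ((1 + a) * t)) ^ q)"
proof -
  define s where "s = (1 + a) * t"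
  define Y where "Y = (b / s) ^ q"
  have s: "0 < s" "s \<le> 1 + a" using a t by (auto simp: s_def mult_le_cancel_left1)
  have Y: "0 \<le> Y" using b s by (simp add: Y_def)
  have "n1 ^ q \<le> (a + b) ^ q" using n1 by (intro power_mono) auto
  also have "\<dots> \<le> 2 ^ q * (a ^ q + b ^ q)" using a b by (rule power_add_le)
  finally have n1q: "n1 ^ q \<le> 2 ^ q * a ^ q + 2 ^ q * b ^ q" by (simp only: distrib_left)
  have "b = s * (b / s)" using s by simp
  then have "b ^ q = s ^ q * Y" unfolding Y_def by (metis power_mult_distrib)
  also have "\<dots> \<le> (1 + a) ^ q * Y" using s Y by (intro mult_right_mono power_mono) auto
  also have "\<dots> \<le> 2 ^ q * (1 + a ^ q) * Y"
    using power_add_le[of 1 a q] a Y by (intro mult_right_mono) auto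
  finally have "2 ^ q * b ^ q \<le> 2 ^ q * (2 ^ q * (1 + a ^ q) * Y)" by simp
  also have "\<dots> = 4 ^ q * (1 + a ^ q) * Y"
    using power_mult_distrib[of "2::real" 2 q] by (simp add: mult.assoc)
  finally have "1 + n1 ^ q \<le> 1 + 2 ^ q * a ^ q + 4 ^ q * (1 + a ^ q) * Y"
    using n1q by linarith
  also have "\<dots> \<le> (1 + a ^ q) * (1 + 2 ^ q + 4 ^ q * Y)"
  proof -
    have "(1 + a ^ q) * (1 + 2 ^ q + 4 ^ q * Y) =
        (1 + 2 ^ q * a ^ q + 4 ^ q * (1 + a ^ q) * Y) + (2 ^ q + a ^ q)"
      by (simp add: algebra_simps)
    moreover have "0 \<le> (2::real) ^ q + a ^ q" using a by simp
    ultimately show ?thesis by linarith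
  qed
  finally show ?thesis unfolding Y_def s_def .
qed

lemma nn_integral_poly_weight_step:
  fixes z :: "'a::euclidean_space"
  assumes "prob_space M" "sets M = sets borel" "0 < t" "t \<le> 1" "0 \<le> Bq"
    and mom: "(\<integral>\<^sup>+z1. ennreal ((norm (z1 - z) / ((1 + norm z) * t)) ^ q) \<partial>M) \<le> ennreal Bq"
  shows "(\<integral>\<^sup>+z1. ennreal (1 + norm z1 ^ q) \<partial>M) \<le> ennreal ((1 + 2 ^ q + 4 ^ q * Bq) * (1 + norm z ^ q))"
proof -
  interpret prob_space M by fact
  define W where "W = 1 + norm z ^ q"
  define X where "X z1 = (norm (z1 - z) / ((1 + norm z) * t)) ^ q" for z1
  have W: "W \<ge> 1" by (simp add: W_def)
  have X: "0 \<le> X z1" for z1 using assms by (simp add: X_def)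
  have "ennreal (1 + norm z1 ^ q) \<le> ennreal (W * (1 + 2 ^ q)) + ennreal (W * 4 ^ q) * ennreal (X z1)"
    for z1
  proof -
    have "1 + norm z1 ^ q \<le> W * (1 + 2 ^ q + 4 ^ q * X z1)"
      unfolding W_def X_def using assms norm_triangle_sub[of z1 z]
      by (intro poly_weight_le_displacement) (auto simp: add.commute)
    then have "ennreal (1 + norm z1 ^ q) \<le> ennreal (W * (1 + 2 ^ q) + W * 4 ^ q * X z1)"
      by (intro ennreal_leI) (simp add: algebra_simps)
    also have "\<dots> = ennreal (W * (1 + 2 ^ q)) + ennreal (W * 4 ^ q) * ennreal (X z1)"
      using W X[of z1] by (simp add: ennreal_mult ennreal_plus)
    finally show ?thesis .
  qed
  then have "(\<integral>\<^sup>+z1. ennreal (1 + norm z1 ^ q) \<partial>M)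
      \<le> (\<integral>\<^sup>+z1. ennreal (W * (1 + 2 ^ q)) + ennreal (W * 4 ^ q) * ennreal (X z1) \<partial>M)"
    by (intro nn_integral_mono)
  also have "\<dots> = ennreal (W * (1 + 2 ^ q)) + ennreal (W * 4 ^ q) * (\<integral>\<^sup>+z1. ennreal (X z1) \<partial>M)"
  proof -
    have "(\<lambda>z1. ennreal (X z1)) \<in> borel_measurable M"
      unfolding X_def measurable_cong_sets[OF assms(2) refl] by measurable
    then show ?thesis by (simp add: nn_integral_add nn_integral_cmult emeasure_space_1)
  qed
  also have "\<dots> \<le> ennreal (W * (1 + 2 ^ q)) + ennreal (W * 4 ^ q) * ennreal Bq"
    using mom unfolding X_def by (intro add_mono mult_left_mono) auto
  also have "\<dots> = ennreal ((1 + 2 ^ q + 4 ^ q * Bq) * W)"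
    using W assms(5) by (simp add: ennreal_mult[symmetric] ennreal_plus[symmetric] algebra_simps
        del: ennreal_plus)
  finally show ?thesis unfolding W_def .
qed

lemma good_step_moment_bounded:
  assumes "good_step \<psi>"
  shows "moment_bounded \<psi>"
proof -
  obtain \<eta>0 where \<eta>0: "\<eta>0 > 0" and meas: "\<forall>\<eta>>0. \<psi> \<eta> \<in> borel \<rightarrow>\<^sub>M prob_algebra borel"
    and mom: "\<forall>m::nat. \<exists>B. \<forall>\<eta>\<in>{0<..\<eta>0}. \<forall>z0.
      (\<integral>\<^sup>+z1. ennreal ((norm (z1 - z0) / ((1 + norm z0) * sqrt \<eta>)) ^ m) \<partial>\<psi> \<eta> z0) \<le> ennreal B"
    using assms unfolding good_step_def by blast
  have "\<exists>B\<ge>0. \<forall>\<^sub>F \<eta> in at_right 0. \<forall>z.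
      (\<integral>\<^sup>+y. ennreal (1 + norm y ^ q) \<partial>\<psi> \<eta> z) \<le> ennreal (B * (1 + norm z ^ q))" for q
  proof -
    obtain Bq where Bq: "\<forall>\<eta>\<in>{0<..\<eta>0}. \<forall>z0.
        (\<integral>\<^sup>+z1. ennreal ((norm (z1 - z0) / ((1 + norm z0) * sqrt \<eta>)) ^ q) \<partial>\<psi> \<eta> z0) \<le> ennreal Bq"
      using mom by blast
    have "\<forall>\<^sub>F \<eta> in at_right 0. 0 < \<eta> \<and> \<eta> < min \<eta>0 1"
      using \<eta>0 unfolding eventually_at_right_field by (intro exI[of _ "min \<eta>0 1"]) auto
    then have "\<forall>\<^sub>F \<eta> in at_right 0. \<forall>z. (\<integral>\<^sup>+y. ennreal (1 + norm y ^ q) \<partial>\<psi> \<eta> z)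
        \<le> ennreal ((1 + 2 ^ q + 4 ^ q * max Bq 0) * (1 + norm z ^ q))"
    proof (elim eventually_mono, intro allI)
      fix \<eta> z assume \<eta>: "0 < \<eta> \<and> \<eta> < min \<eta>0 1"
      have "(\<integral>\<^sup>+z1. ennreal ((norm (z1 - z) / ((1 + norm z) * sqrt \<eta>)) ^ q) \<partial>\<psi> \<eta> z) \<le> ennreal (max Bq 0)"
        using Bq \<eta> by (auto intro: order_trans ennreal_leI)
      with \<eta> meas prob_kernel_apply[of "\<psi> \<eta>" z]
      show "(\<integral>\<^sup>+y. ennreal (1 + norm y ^ q) \<partial>\<psi> \<eta> z)
        \<le> ennreal ((1 + 2 ^ q + 4 ^ q * max Bq 0) * (1 + norm z ^ q))"
        by (intro nn_integral_poly_weight_step) auto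
    qed
    then show ?thesis by (intro exI[of _ "1 + 2 ^ q + 4 ^ q * max Bq 0"]) simp
  qed
  with meas show ?thesis unfolding moment_bounded_def by blast
qed

section \<open>Expansion along a chain of kernels\<close>

lemma sum_triangle_swap:
  fixes g :: "nat \<Rightarrow> nat \<Rightarrow> 'b::comm_monoid_add"
  shows "(\<Sum>k\<le>n. \<Sum>a\<le>n - k. g a k) = (\<Sum>m\<le>n. \<Sum>a\<le>m. g a (m - a))"
proof -
  have "(\<Sum>k\<le>n. \<Sum>a\<le>n - k. g a k) = (\<Sum>(k, a)\<in>Sigma {..n} (\<lambda>k. {..n - k}). g a k)"
    by (rule sum.Sigma) auto
  also have "\<dots> = (\<Sum>(m, a)\<in>Sigma {..n} (\<lambda>m. {..m}). g a (m - a))"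
    by (rule sum.reindex_bij_witness[where i="\<lambda>(m, a). (m - a, a)" and j="\<lambda>(k, a). (k + a, a)"]) auto
  also have "\<dots> = (\<Sum>m\<le>n. \<Sum>a\<le>m. g a (m - a))"
    by (rule sum.Sigma[symmetric]) auto
  finally show ?thesis .
qed

text \<open>Multiplying a polynomial of degree \<open>n\<close> in \<open>\<eta>\<close> by a Taylor polynomial of degree
  \<open>p \<ge> n\<close> in \<open>\<eta> \<kappa>\<close>: the Cauchy product up to order \<open>n\<close> plus the terms of order above \<open>n\<close>.\<close>
lemma sum_truncated_product_split:
  fixes x :: "nat \<Rightarrow> nat \<Rightarrow> real"
  assumes "n \<le> p"
  shows "(\<Sum>k\<le>n. \<eta> ^ k * (\<Sum>a\<le>p. (\<eta> * \<kappa>) ^ a / fact a * x a k)) =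
         (\<Sum>m\<le>n. \<eta> ^ m * (\<Sum>a\<le>m. \<kappa> ^ a / fact a * x a (m - a))) +
         (\<Sum>k\<le>n. \<Sum>a\<in>{n - k<..p}. \<eta> ^ (k + a) * (\<kappa> ^ a / fact a * x a k))"
proof -
  define c where "c a k = \<kappa> ^ a / fact a * x a k" for a k
  have "(\<Sum>k\<le>n. \<eta> ^ k * (\<Sum>a\<le>p. (\<eta> * \<kappa>) ^ a / fact a * x a k)) = (\<Sum>k\<le>n. \<Sum>a\<le>p. \<eta> ^ (k + a) * c a k)"
    by (simp add: c_def sum_distrib_left power_add power_mult_distrib mult_ac)
  also have "\<dots> = (\<Sum>k\<le>n. (\<Sum>a\<le>n - k. \<eta> ^ (k + a) * c a k) + (\<Sum>a\<in>{n - k<..p}. \<eta> ^ (k + a) * c a k))"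
  proof (rule sum.cong[OF refl])
    fix k
    have "{..p} = {..n - k} \<union> {n - k<..p}" using assms by auto
    then show "(\<Sum>a\<le>p. \<eta> ^ (k + a) * c a k) =
        (\<Sum>a\<le>n - k. \<eta> ^ (k + a) * c a k) + (\<Sum>a\<in>{n - k<..p}. \<eta> ^ (k + a) * c a k)"
      by (simp only:) (rule sum.union_disjoint; auto)
  qed
  also have "\<dots> = (\<Sum>k\<le>n. \<Sum>a\<le>n - k. \<eta> ^ (k + a) * c a k) + (\<Sum>k\<le>n. \<Sum>a\<in>{n - k<..p}. \<eta> ^ (k + a) * c a k)"
    by (rule sum.distrib)
  also have "(\<Sum>k\<le>n. \<Sum>a\<le>n - k. \<eta> ^ (k + a) * c a k) = (\<Sum>m\<le>n. \<Sum>a\<le>m. \<eta> ^ (m - a + a) * c a (m - a))"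
    by (rule sum_triangle_swap)
  also have "\<dots> = (\<Sum>m\<le>n. \<eta> ^ m * (\<Sum>a\<le>m. c a (m - a)))"
    by (auto simp: sum_distrib_left intro!: sum.cong)
  finally show ?thesis by (simp add: c_def)
qed

lemma weak_O_truncated_product:
  assumes "n \<le> p" "\<And>a k. poly_growth (X a k)"
  shows "weak_O (\<lambda>\<eta> z. (\<Sum>k\<le>n. \<eta> ^ k * (\<Sum>a\<le>p. (\<eta> * \<kappa>) ^ a / fact a * X a k z))
                     - (\<Sum>m\<le>n. \<eta> ^ m * (\<Sum>a\<le>m. \<kappa> ^ a / fact a * X a (m - a) z)))
           (\<lambda>\<eta>. \<eta> ^ (n + 1))"
  unfolding sum_truncated_product_split[OF assms(1)] add_diff_cancel_left'
  by (intro weak_O_sum weak_O_power_poly_growth poly_growth_mult poly_growth_const assms(2)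
      finite_atMost finite_greaterThanAtMost) auto

lemma eventually_integral_expansion:
  assumes k: "moment_bounded k" and R: "\<And>\<eta>. \<eta> > 0 \<Longrightarrow> R \<eta> \<in> borel_measurable borel"
    and "weak_O R g" and G: "\<And>j. test_fun (G j)"
  shows "\<forall>\<^sub>F \<eta> in at_right 0. \<forall>z. (\<integral>y. R \<eta> y + (\<Sum>j\<le>n. \<eta> ^ j * G j y) \<partial>k \<eta> z) =
           (\<integral>y. R \<eta> y \<partial>k \<eta> z) + (\<Sum>j\<le>n. \<eta> ^ j * (\<integral>y. G j y \<partial>k \<eta> z))"
proof -
  have "\<forall>\<^sub>F \<eta> in at_right 0. \<forall>j\<in>{..n}. \<forall>z. integrable (k \<eta> z) (G j)"
    using moment_bounded_integrable[OF k _ weak_O_poly_growth[OF test_fun_imp_poly_growth[OF G]]]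
      test_fun_borel_measurable[OF G] by (intro eventually_ball_finite) auto
  moreover have "\<forall>\<^sub>F \<eta> in at_right 0. \<forall>z. integrable (k \<eta> z) (R \<eta>)"
    using moment_bounded_integrable[of k R] k R \<open>weak_O R g\<close> by blast
  ultimately show ?thesis
  proof eventually_elim
    case (elim \<eta>)
    then have "integrable (k \<eta> z) (\<lambda>y. \<Sum>j\<le>n. \<eta> ^ j * G j y)" for z
      by (intro Bochner_Integration.integrable_sum integrable_mult_right) auto
    with elim show ?case
      by (simp add: Bochner_Integration.integral_sum integral_mult_right_zero)
  qed
qed

text \<open>Integrating against a kernel of weak order \<open>p\<close> for \<open>exp (\<eta> \<kappa> L)\<close> multiplies an expansion
  in \<open>\<eta>\<close> by the Taylor polynomial of \<open>exp (\<eta> \<kappa> L)\<close>, truncated at order \<open>n\<close>.\<close>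
lemma weak_O_expansion_step:
  assumes k: "moment_bounded k" and L: "\<And>f. test_fun f \<Longrightarrow> test_fun (L f)"
    and order: "\<And>f. test_fun f \<Longrightarrow>
      weak_O (\<lambda>\<eta> z. (\<integral>y. f y \<partial>k \<eta> z) - texp p (\<eta> * \<kappa>) L f z) (\<lambda>\<eta>. \<eta> ^ (p + 1))"
    and "n \<le> p" and G: "\<And>j. test_fun (G j)"
    and F: "\<And>\<eta>. \<eta> > 0 \<Longrightarrow> F \<eta> \<in> borel_measurable borel"
    and F_expansion: "weak_O (\<lambda>\<eta> y. F \<eta> y - (\<Sum>j\<le>n. \<eta> ^ j * G j y)) (\<lambda>\<eta>. \<eta> ^ (n + 1))"
  shows "weak_O (\<lambda>\<eta> z. (\<integral>y. F \<eta> y \<partial>k \<eta> z)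
           - (\<Sum>m\<le>n. \<eta> ^ m * (\<Sum>a\<le>m. \<kappa> ^ a / fact a * (L ^^ a) (G (m - a)) z)))
           (\<lambda>\<eta>. \<eta> ^ (n + 1))"
proof -
  define R where "R \<eta> y = F \<eta> y - (\<Sum>j\<le>n. \<eta> ^ j * G j y)" for \<eta> y
  define D where "D j \<eta> z = (\<integral>y. G j y \<partial>k \<eta> z) - texp p (\<eta> * \<kappa>) L (G j) z" for j \<eta> z
  have G_meas [measurable]: "G j \<in> borel_measurable borel" for j
    using G by (rule test_fun_borel_measurable)
  have R_meas: "R \<eta> \<in> borel_measurable borel" if "\<eta> > 0" for \<eta>
    using F[OF that] unfolding R_def by measurable
  have R_expansion: "weak_O R (\<lambda>\<eta>. \<eta> ^ (n + 1))"
    using F_expansion unfolding R_def .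
  have "F = (\<lambda>\<eta> y. R \<eta> y + (\<Sum>j\<le>n. \<eta> ^ j * G j y))" by (simp add: R_def)
  with eventually_integral_expansion[OF k _ R_expansion G, where n = n] R_meas
  have "\<forall>\<^sub>F \<eta> in at_right 0. \<forall>z. (\<integral>y. F \<eta> y \<partial>k \<eta> z) =
      (\<integral>y. R \<eta> y \<partial>k \<eta> z) + (\<Sum>j\<le>n. \<eta> ^ j * (\<integral>y. G j y \<partial>k \<eta> z))"
    by simp
  then have "\<forall>\<^sub>F \<eta> in at_right 0. \<forall>z. (\<integral>y. R \<eta> y \<partial>k \<eta> z) + (\<Sum>j\<le>n. \<eta> ^ j * D j \<eta> z)
      + ((\<Sum>j\<le>n. \<eta> ^ j * texp p (\<eta> * \<kappa>) L (G j) z)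
         - (\<Sum>m\<le>n. \<eta> ^ m * (\<Sum>a\<le>m. \<kappa> ^ a / fact a * (L ^^ a) (G (m - a)) z)))
    = (\<integral>y. F \<eta> y \<partial>k \<eta> z)
         - (\<Sum>m\<le>n. \<eta> ^ m * (\<Sum>a\<le>m. \<kappa> ^ a / fact a * (L ^^ a) (G (m - a)) z))"
    by eventually_elim (simp add: D_def algebra_simps sum.distrib sum_subtractf)
  moreover have "weak_O (\<lambda>\<eta> z. \<integral>y. R \<eta> y \<partial>k \<eta> z) (\<lambda>\<eta>. \<eta> ^ (n + 1))"
    using weak_O_integral[of k R] k R_meas R_expansion by blast
  moreover have "weak_O (\<lambda>\<eta> z. \<Sum>j\<le>n. \<eta> ^ j * D j \<eta> z) (\<lambda>\<eta>. \<eta> ^ (n + 1))"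
  proof (intro weak_O_sum finite_atMost)
    fix j
    show "weak_O (\<lambda>\<eta> z. \<eta> ^ j * D j \<eta> z) (\<lambda>\<eta>. \<eta> ^ (n + 1))"
    proof (rule weak_O_power_mono)
      show "weak_O (\<lambda>\<eta> z. \<eta> ^ j * D j \<eta> z) (\<lambda>\<eta>. \<eta> ^ (j + (p + 1)))"
        unfolding D_def by (rule weak_O_mult_power[OF order[OF G]])
    qed (use \<open>n \<le> p\<close> in simp)
  qed
  moreover have "weak_O (\<lambda>\<eta> z. (\<Sum>j\<le>n. \<eta> ^ j * texp p (\<eta> * \<kappa>) L (G j) z)
         - (\<Sum>m\<le>n. \<eta> ^ m * (\<Sum>a\<le>m. \<kappa> ^ a / fact a * (L ^^ a) (G (m - a)) z))) (\<lambda>\<eta>. \<eta> ^ (n + 1))"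
    unfolding texp_def using \<open>n \<le> p\<close> G L
    by (intro weak_O_truncated_product test_fun_imp_poly_growth test_fun_funpow)
  ultimately show ?thesis
    by (blast intro: weak_O_eventually_cong weak_O_add)
qed

text \<open>The coefficient of \<open>\<eta>^k\<close> in \<open>exp (\<eta> \<kappa> L i\<^sub>1) (exp (\<eta> \<kappa> L i\<^sub>2) (\<dots> \<phi>))\<close> for the
  list \<open>[i\<^sub>1, i\<^sub>2, \<dots>]\<close>; the kernel of \<open>i\<^sub>1\<close> acts first on the chain, hence outermost here.\<close>
primrec exp_product_coeff ::
  "(nat \<Rightarrow> ('a \<Rightarrow> real) \<Rightarrow> ('a \<Rightarrow> real)) \<Rightarrow> real \<Rightarrow> ('a \<Rightarrow> real) \<Rightarrow> nat list \<Rightarrow> nat \<Rightarrow> 'a \<Rightarrow> real"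
where
  "exp_product_coeff L \<kappa> \<phi> [] k = (\<lambda>z. if k = 0 then \<phi> z else 0)"
| "exp_product_coeff L \<kappa> \<phi> (i # is) k =
     (\<lambda>z. \<Sum>a\<le>k. \<kappa> ^ a / fact a * (L i ^^ a) (exp_product_coeff L \<kappa> \<phi> is (k - a)) z)"

lemma test_fun_exp_product_coeff:
  assumes "test_fun \<phi>" "\<And>i f. i \<in> set is \<Longrightarrow> test_fun f \<Longrightarrow> test_fun (L i f)"
  shows "test_fun (exp_product_coeff L \<kappa> \<phi> is k)"
  using assms(2)
proof (induction "is" arbitrary: k)
  case Nil
  then show ?case using assms(1) by (cases "k = 0") (simp_all add: test_fun_const)
next
  case (Cons i "is")
  have "test_fun ((L i ^^ a) (exp_product_coeff L \<kappa> \<phi> is (k - a)))" for a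
    by (rule test_fun_funpow) (use Cons in auto)
  then show ?case
    unfolding exp_product_coeff.simps by (intro test_fun_sum test_fun_cmult) auto
qed

lemma integral_run_Cons:
  assumes k: "\<And>j. j \<in> set (i # is) \<Longrightarrow> k j \<in> borel \<rightarrow>\<^sub>M prob_algebra borel"
    and f: "f \<in> borel_measurable borel"
    and "integrable (run k (i # is) z) f" "\<And>y. integrable (run k is y) (f :: _ \<Rightarrow> real)"
  shows "(\<integral>x. f x \<partial>run k (i # is) z) = (\<integral>y. (\<integral>x. f x \<partial>run k is y) \<partial>k i z)"
proof -
  have "sets (k i z) = sets borel" using k by (intro prob_kernel_apply) auto
  moreover have "run k is \<in> borel \<rightarrow>\<^sub>M subprob_algebra borel"
    using k by (intro measurable_prob_algebraD measurable_run) auto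
  ultimately have "run k is \<in> k i z \<rightarrow>\<^sub>M subprob_algebra borel"
    by (subst measurable_cong_sets) auto
  then show ?thesis
    unfolding run.simps by (rule integral_bind_integrable[OF _ f]) (use assms(3,4) in simp_all)
qed

lemma measurable_integral_run:
  fixes f :: "'a::topological_space \<Rightarrow> real"
  assumes "\<And>j. j \<in> set is \<Longrightarrow> k j \<in> borel \<rightarrow>\<^sub>M prob_algebra borel"
    and "f \<in> borel_measurable borel"
  shows "(\<lambda>y. \<integral>x. f x \<partial>run k is y) \<in> borel_measurable borel"
proof -
  have "run k is \<in> borel \<rightarrow>\<^sub>M subprob_algebra borel"
    using assms(1) by (intro measurable_prob_algebraD measurable_run)
  from measurable_compose[OF this integral_measurable_subprob_algebra[OF assms(2)]] show ?thesis .
qed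

lemma eventually_integral_run_Cons:
  assumes \<psi>: "\<And>j. j \<in> set (i # is) \<Longrightarrow> moment_bounded (\<psi> j)" and \<phi>: "test_fun \<phi>"
  shows "\<forall>\<^sub>F \<eta> in at_right 0. \<forall>z. (\<integral>y. \<phi> y \<partial>run (\<lambda>i. \<psi> i \<eta>) (i # is) z) =
           (\<integral>y. (\<integral>x. \<phi> x \<partial>run (\<lambda>i. \<psi> i \<eta>) is y) \<partial>\<psi> i \<eta> z)"
proof -
  have \<phi>_meas: "\<phi> \<in> borel_measurable borel" using \<phi> by (rule test_fun_borel_measurable)
  have integrable: "\<forall>\<^sub>F \<eta> in at_right 0. \<forall>z. integrable (run (\<lambda>i. \<psi> i \<eta>) js z) \<phi>"
    if "set js \<subseteq> set (i # is)" for js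
  proof (rule moment_bounded_integrable)
    show "moment_bounded (\<lambda>\<eta>. run (\<lambda>i. \<psi> i \<eta>) js)"
      using that \<psi> by (intro moment_bounded_run) auto
  qed (use \<phi>_meas weak_O_poly_growth[OF test_fun_imp_poly_growth[OF \<phi>]] in auto)
  show ?thesis
    using integrable[OF order_refl] integrable[OF set_subset_Cons] eventually_at_right_0_unit_interval
  proof eventually_elim
    case (elim \<eta>)
    have "\<psi> j \<eta> \<in> borel \<rightarrow>\<^sub>M prob_algebra borel" if "j \<in> set (i # is)" for j
      using elim(3) \<psi>[OF that] by (intro moment_boundedD(1)) auto
    with elim(1,2) \<phi>_meas show ?case
      by (intro allI integral_run_Cons) auto
  qed
qed

lemma weak_O_run_expansion:
  assumes \<psi>: "\<And>i. i \<in> I \<Longrightarrow> moment_bounded (\<psi> i)"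
    and L: "\<And>i f. i \<in> I \<Longrightarrow> test_fun f \<Longrightarrow> test_fun (L i f)"
    and order: "\<And>i f. i \<in> I \<Longrightarrow> test_fun f \<Longrightarrow>
      weak_O (\<lambda>\<eta> z. (\<integral>y. f y \<partial>\<psi> i \<eta> z) - texp p (\<eta> * \<kappa>) (L i) f z) (\<lambda>\<eta>. \<eta> ^ (p + 1))"
    and "n \<le> p" and \<phi>: "test_fun \<phi>"
  shows "set is \<subseteq> I \<Longrightarrow>
    weak_O (\<lambda>\<eta> z. (\<integral>y. \<phi> y \<partial>run (\<lambda>i. \<psi> i \<eta>) is z) - (\<Sum>k\<le>n. \<eta> ^ k * exp_product_coeff L \<kappa> \<phi> is k z))
      (\<lambda>\<eta>. \<eta> ^ (n + 1))"
proof (induction "is")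
  case Nil
  have "(\<integral>y. \<phi> y \<partial>run (\<lambda>i. \<psi> i \<eta>) [] z) = (\<Sum>k\<le>n. \<eta> ^ k * exp_product_coeff L \<kappa> \<phi> [] k z)" for \<eta> z
  proof -
    have "(\<Sum>k\<le>n. \<eta> ^ k * exp_product_coeff L \<kappa> \<phi> [] k z) = (\<Sum>k\<le>n. if k = 0 then \<phi> z else 0)"
      by (intro sum.cong) auto
    then show ?thesis using test_fun_borel_measurable[OF \<phi>] by (simp add: integral_return)
  qed
  then show ?case by (simp add: weak_O_zero)
next
  case (Cons i "is")
  have "set is \<subseteq> I" using Cons.prems by simp
  define F where "F \<eta> y = (\<integral>x. \<phi> x \<partial>run (\<lambda>i. \<psi> i \<eta>) is y)" for \<eta> y
  have F_meas: "F \<eta> \<in> borel_measurable borel" if "\<eta> > 0" for \<eta>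
    unfolding F_def using that \<open>set is \<subseteq> I\<close> \<psi> test_fun_borel_measurable[OF \<phi>]
    by (intro measurable_integral_run moment_boundedD(1)) auto
  have step: "weak_O (\<lambda>\<eta> z. (\<integral>y. F \<eta> y \<partial>\<psi> i \<eta> z)
      - (\<Sum>m\<le>n. \<eta> ^ m * exp_product_coeff L \<kappa> \<phi> (i # is) m z)) (\<lambda>\<eta>. \<eta> ^ (n + 1))"
    unfolding exp_product_coeff.simps
  proof (rule weak_O_expansion_step[where G = "exp_product_coeff L \<kappa> \<phi> is" and F = F])
    have "i \<in> I" using Cons.prems by simp
    then show "moment_bounded (\<psi> i)"
      and "\<And>f. test_fun f \<Longrightarrow> test_fun (L i f)"
      and "\<And>f. test_fun f \<Longrightarrow> weak_O (\<lambda>\<eta> z. (\<integral>y. f y \<partial>\<psi> i \<eta> z)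
          - texp p (\<eta> * \<kappa>) (L i) f z) (\<lambda>\<eta>. \<eta> ^ (p + 1))"
      using \<psi> L order by auto
    show "test_fun (exp_product_coeff L \<kappa> \<phi> is j)" for j
      using \<open>set is \<subseteq> I\<close> L by (intro test_fun_exp_product_coeff[OF \<phi>]) auto
    show "weak_O (\<lambda>\<eta> y. F \<eta> y - (\<Sum>j\<le>n. \<eta> ^ j * exp_product_coeff L \<kappa> \<phi> is j y)) (\<lambda>\<eta>. \<eta> ^ (n + 1))"
      using Cons.IH \<open>set is \<subseteq> I\<close> unfolding F_def by simp
  qed (use \<open>n \<le> p\<close> F_meas in auto)
  have run_Cons: "\<forall>\<^sub>F \<eta> in at_right 0. \<forall>z.
      (\<integral>y. \<phi> y \<partial>run (\<lambda>i. \<psi> i \<eta>) (i # is) z) = (\<integral>y. F \<eta> y \<partial>\<psi> i \<eta> z)"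
    unfolding F_def using Cons.prems by (intro eventually_integral_run_Cons[OF \<psi> \<phi>]) auto
  show ?case
    by (rule weak_O_eventually_cong[OF step]) (use run_Cons in \<open>eventually_elim, simp\<close>)
qed

section \<open>Averaging over the orderings\<close>

text \<open>\<open>ordered_pair_sum T [x\<^sub>1, \<dots>, x\<^sub>m] = (\<Sum>a<b. T x\<^sub>a x\<^sub>b) + (\<Sum>a. T x\<^sub>a x\<^sub>a) / 2\<close>, the second-order
  coefficient of a product of exponentials.\<close>
primrec ordered_pair_sum :: "('i \<Rightarrow> 'i \<Rightarrow> real) \<Rightarrow> 'i list \<Rightarrow> real" where
  "ordered_pair_sum T [] = 0"
| "ordered_pair_sum T (i # is) = ordered_pair_sum T is + (\<Sum>j\<leftarrow>is. T i j) + T i i / 2"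

lemma ordered_pair_sum_snoc:
  "ordered_pair_sum T (xs @ [i]) = ordered_pair_sum T xs + (\<Sum>j\<leftarrow>xs. T j i) + T i i / 2"
  by (induction xs) (simp_all add: algebra_simps)

lemma ordered_pair_sum_rev:
  "ordered_pair_sum T xs + ordered_pair_sum T (rev xs) = (\<Sum>a\<leftarrow>xs. \<Sum>b\<leftarrow>xs. T a b)"
proof (induction xs)
  case Nil
  then show ?case by simp
next
  case (Cons i xs)
  have "(\<Sum>j\<leftarrow>rev xs. T j i) = (\<Sum>j\<leftarrow>xs. T j i)"
    by (simp add: rev_map[symmetric] sum_list_rev)
  with Cons show ?case
    by (simp add: ordered_pair_sum_snoc sum_list_addf algebra_simps)
qed

lemma sum_list_permutation:
  "xs \<in> permutations_of_set A \<Longrightarrow> (\<Sum>j\<leftarrow>xs. f j) = (\<Sum>j\<in>A. f j)"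
  by (auto simp: permutations_of_set_def sum_list_distinct_conv_sum_set)

text \<open>Pairing each ordering with its reverse: on average over all orderings, every ordered
  pair of distinct indices occurs with weight one half.\<close>
lemma sum_permutations_ordered_pair_sum:
  "(\<Sum>xs\<in>permutations_of_set A. ordered_pair_sum T xs)
     = card (permutations_of_set A) / 2 * (\<Sum>a\<in>A. \<Sum>b\<in>A. T a b)"
proof -
  let ?P = "permutations_of_set A"
  have "(\<Sum>xs\<in>?P. ordered_pair_sum T (rev xs)) = (\<Sum>xs\<in>?P. ordered_pair_sum T xs)"
    by (rule sum.reindex_bij_witness[where i=rev and j=rev]) (auto simp: permutations_of_set_def)
  then have "2 * (\<Sum>xs\<in>?P. ordered_pair_sum T xs) =
      (\<Sum>xs\<in>?P. ordered_pair_sum T xs + ordered_pair_sum T (rev xs))"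
    by (simp add: sum.distrib)
  also have "\<dots> = (\<Sum>xs\<in>?P. \<Sum>a\<in>A. \<Sum>b\<in>A. T a b)"
    by (intro sum.cong refl) (simp add: ordered_pair_sum_rev sum_list_permutation)
  finally show ?thesis by simp
qed

lemma exp_product_coeff_0: "exp_product_coeff L \<kappa> \<phi> is 0 = \<phi>"
  by (induction "is") auto

lemma exp_product_coeff_1: "exp_product_coeff L \<kappa> \<phi> is 1 = (\<lambda>z. \<kappa> * (\<Sum>j\<leftarrow>is. L j \<phi> z))"
  by (induction "is") (auto simp: exp_product_coeff_0 algebra_simps)

lemma exp_product_coeff_2:
  assumes "test_fun \<phi>" "\<And>i. i \<in> set is \<Longrightarrow> test_linear (L i)"
  shows "exp_product_coeff L \<kappa> \<phi> is 2 = (\<lambda>z. \<kappa>\<^sup>2 * ordered_pair_sum (\<lambda>a b. L a (L b \<phi>) z) is)"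
  using assms(2)
proof (induction "is")
  case Nil
  then show ?case by simp
next
  case (Cons i "is")
  have Li: "test_linear (L i)" using Cons.prems by simp
  have "\<And>j. j \<in> set is \<Longrightarrow> test_fun (L j \<phi>)"
    using Cons.prems assms(1) by (simp add: test_linear_test_fun)
  then have "L i (\<lambda>z. \<kappa> * (\<Sum>j\<leftarrow>is. L j \<phi> z)) = (\<lambda>z. \<kappa> * (\<Sum>j\<leftarrow>is. L i (L j \<phi>) z))"
    by (simp add: test_linear_cmult[OF Li] test_linear_sum_list[OF Li] test_fun_sum_list)
  with Cons show ?case
    by (simp add: numeral_2_eq_2 exp_product_coeff_0 exp_product_coeff_1[unfolded One_nat_def]
        power2_eq_square algebra_simps)
qed

lemma average_exp_product_coeff:
  assumes "finite A" "test_fun \<phi>" "\<And>i. i \<in> A \<Longrightarrow> test_linear (L i)" "k \<le> 2"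
  shows "(\<Sum>\<pi>\<in>permutations_of_set A. exp_product_coeff L \<kappa> \<phi> \<pi> k z) / card (permutations_of_set A)
       = \<kappa> ^ k / fact k * ((\<lambda>f z. \<Sum>i\<in>A. L i f z) ^^ k) \<phi> z"
proof -
  let ?P = "permutations_of_set A"
  have P: "real (card ?P) > 0" using assms(1) by simp
  have set_P: "set \<pi> = A" if "\<pi> \<in> ?P" for \<pi> using that by (simp add: permutations_of_set_def)
  consider "k = 0" | "k = 1" | "k = 2" using \<open>k \<le> 2\<close> by linarith
  then show ?thesis
  proof cases
    case 1
    with P assms(1) show ?thesis by (simp add: exp_product_coeff_0)
  next
    case 2
    have "(\<Sum>\<pi>\<in>?P. exp_product_coeff L \<kappa> \<phi> \<pi> 1 z) = (\<Sum>\<pi>\<in>?P. \<kappa> * (\<Sum>i\<in>A. L i \<phi> z))"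
      by (intro sum.cong refl) (simp add: exp_product_coeff_1[unfolded One_nat_def] sum_list_permutation)
    with P 2 show ?thesis by simp
  next
    case 3
    have "\<And>b. b \<in> A \<Longrightarrow> test_fun (L b \<phi>)" using assms(2,3) by (simp add: test_linear_test_fun)
    then have "L a (\<lambda>z. \<Sum>b\<in>A. L b \<phi> z) = (\<lambda>z. \<Sum>b\<in>A. L a (L b \<phi>) z)" if "a \<in> A" for a
      using test_linear_sum[OF assms(3)[OF that] assms(1)] by simp
    then have "((\<lambda>f z. \<Sum>i\<in>A. L i f z) ^^ 2) \<phi> z = (\<Sum>a\<in>A. \<Sum>b\<in>A. L a (L b \<phi>) z)"
      by (simp add: numeral_2_eq_2)
    moreover have "(\<Sum>\<pi>\<in>?P. exp_product_coeff L \<kappa> \<phi> \<pi> 2 z) =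
        (\<Sum>\<pi>\<in>?P. \<kappa>\<^sup>2 * ordered_pair_sum (\<lambda>a b. L a (L b \<phi>) z) \<pi>)"
    proof (intro sum.cong refl)
      fix \<pi> assume "\<pi> \<in> ?P"
      then have "\<And>i. i \<in> set \<pi> \<Longrightarrow> test_linear (L i)" using set_P assms(3) by auto
      from exp_product_coeff_2[OF assms(2) this]
      show "exp_product_coeff L \<kappa> \<phi> \<pi> 2 z = \<kappa>\<^sup>2 * ordered_pair_sum (\<lambda>a b. L a (L b \<phi>) z) \<pi>"
        by simp
    qed
    ultimately show ?thesis
      using P 3 by (simp add: sum_distrib_left[symmetric] sum_permutations_ordered_pair_sum)
  qed
qed

lemma weak_O_texp_tail:
  fixes A :: "('a::real_normed_vector \<Rightarrow> real) \<Rightarrow> ('a \<Rightarrow> real)"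
  assumes "n \<le> p" "\<And>k. poly_growth ((A ^^ k) \<phi>)"
  shows "weak_O (\<lambda>\<eta> z. texp p (\<eta> * c) A \<phi> z - texp n (\<eta> * c) A \<phi> z) (\<lambda>\<eta>. \<eta> ^ (n + 1))"
proof -
  have "(\<Sum>k\<le>p. f k) = (\<Sum>k\<le>n. f k) + (\<Sum>k\<in>{n<..p}. f k)" for f :: "nat \<Rightarrow> real"
  proof -
    have "(\<Sum>k\<le>p. f k) = (\<Sum>k\<in>{..n} \<union> {n<..p}. f k)"
      using assms(1) by (intro sum.cong) auto
    also have "\<dots> = (\<Sum>k\<le>n. f k) + (\<Sum>k\<in>{n<..p}. f k)"
      by (rule sum.union_disjoint) auto
    finally show ?thesis .
  qed
  then have "texp p (\<eta> * c) A \<phi> z - texp n (\<eta> * c) A \<phi> z =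
      (\<Sum>k\<in>{n<..p}. \<eta> ^ k * (c ^ k / fact k * (A ^^ k) \<phi> z))" for \<eta> z
    unfolding texp_def by (simp add: power_mult_distrib mult.assoc)
  moreover have "weak_O (\<lambda>\<eta> z. \<Sum>k\<in>{n<..p}. \<eta> ^ k * (c ^ k / fact k * (A ^^ k) \<phi> z)) (\<lambda>\<eta>. \<eta> ^ (n + 1))"
    using assms(2) by (intro weak_O_sum weak_O_power_poly_growth poly_growth_mult poly_growth_const) auto
  ultimately show ?thesis by simp
qed

lemma weak_O_Uop_expansion:
  assumes \<psi>: "\<And>i. i \<in> {1..K} \<Longrightarrow> moment_bounded (\<psi> i)"
    and L: "\<And>i. i \<in> {1..K} \<Longrightarrow> test_linear (L i)"
    and order: "\<And>i f. i \<in> {1..K} \<Longrightarrow> test_fun f \<Longrightarrow>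
      weak_O (\<lambda>\<eta> z. (\<integral>y. f y \<partial>\<psi> i \<eta> z) - texp p (\<eta> * \<kappa>) (L i) f z) (\<lambda>\<eta>. \<eta> ^ (p + 1))"
    and "n \<le> p" "n \<le> 2" and \<phi>: "test_fun \<phi>"
  shows "weak_O (\<lambda>\<eta> z. Uop K \<psi> \<eta> \<phi> z - texp n (\<eta> * \<kappa>) (\<lambda>f z. \<Sum>i\<in>{1..K}. L i f z) \<phi> z)
           (\<lambda>\<eta>. \<eta> ^ (n + 1))"
proof -
  let ?P = "permutations_of_set {1..K}"
  define E where "E \<pi> \<eta> z = (\<integral>y. \<phi> y \<partial>run (\<lambda>i. \<psi> i \<eta>) \<pi> z)
      - (\<Sum>k\<le>n. \<eta> ^ k * exp_product_coeff L \<kappa> \<phi> \<pi> k z)" for \<pi> \<eta> z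
  have "weak_O (E \<pi>) (\<lambda>\<eta>. \<eta> ^ (n + 1))" if "\<pi> \<in> ?P" for \<pi>
    unfolding E_def using that \<psi> L order \<open>n \<le> p\<close> \<phi>
    by (intro weak_O_run_expansion[where I = "{1..K}"])
      (auto simp: permutations_of_set_def test_linear_test_fun)
  then have "weak_O (\<lambda>\<eta> z. 1 / card ?P * (\<Sum>\<pi>\<in>?P. E \<pi> \<eta> z)) (\<lambda>\<eta>. \<eta> ^ (n + 1))"
    by (intro weak_O_cmult weak_O_sum) auto
  moreover have "1 / card ?P * (\<Sum>\<pi>\<in>?P. E \<pi> \<eta> z) =
      Uop K \<psi> \<eta> \<phi> z - texp n (\<eta> * \<kappa>) (\<lambda>f z. \<Sum>i\<in>{1..K}. L i f z) \<phi> z" for \<eta> z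
  proof -
    have "texp n (\<eta> * \<kappa>) (\<lambda>f z. \<Sum>i\<in>{1..K}. L i f z) \<phi> z =
        (\<Sum>k\<le>n. \<eta> ^ k * ((\<Sum>\<pi>\<in>?P. exp_product_coeff L \<kappa> \<phi> \<pi> k z) / card ?P))"
    proof (unfold texp_def, intro sum.cong refl)
      fix k assume "k \<in> {..n}"
      with \<phi> L \<open>n \<le> 2\<close> have "(\<Sum>\<pi>\<in>?P. exp_product_coeff L \<kappa> \<phi> \<pi> k z) / card ?P =
          \<kappa> ^ k / fact k * ((\<lambda>f z. \<Sum>i\<in>{1..K}. L i f z) ^^ k) \<phi> z"
        by (intro average_exp_product_coeff) auto
      then show "(\<eta> * \<kappa>) ^ k / fact k * ((\<lambda>f z. \<Sum>i\<in>{1..K}. L i f z) ^^ k) \<phi> z =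
          \<eta> ^ k * ((\<Sum>\<pi>\<in>?P. exp_product_coeff L \<kappa> \<phi> \<pi> k z) / card ?P)"
        by (simp add: power_mult_distrib)
    qed
    then show ?thesis
      unfolding Uop_def E_def
      by (simp add: integral_pmf_of_set sum_subtractf sum_divide_distrib sum_distrib_left
          sum.swap[where B = "{..n}"] diff_divide_distrib mult_ac)
  qed
  ultimately show ?thesis by simp
qed

lemma weak_O_Uop_texp:
  assumes \<psi>: "\<And>i. i \<in> {1..K} \<Longrightarrow> moment_bounded (\<psi> i)"
    and L: "\<And>i. i \<in> {1..K} \<Longrightarrow> test_linear (L i)"
    and order: "\<And>i f. i \<in> {1..K} \<Longrightarrow> test_fun f \<Longrightarrow>
      weak_O (\<lambda>\<eta> z. (\<integral>y. f y \<partial>\<psi> i \<eta> z) - texp p (\<eta> * \<kappa>) (L i) f z) (\<lambda>\<eta>. \<eta> ^ (p + 1))"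
    and \<phi>: "test_fun \<phi>"
  shows "weak_O (\<lambda>\<eta> z. Uop K \<psi> \<eta> \<phi> z - texp p (\<eta> * \<kappa>) (\<lambda>f z. \<Sum>i\<in>{1..K}. L i f z) \<phi> z)
           (\<lambda>\<eta>. \<eta> ^ (min p 2 + 1))"
proof -
  let ?L = "\<lambda>f z. \<Sum>i\<in>{1..K}. L i f z"
  have "test_fun (?L f)" if "test_fun f" for f
    using L that by (intro test_fun_sum) (auto simp: test_linear_test_fun)
  then have tail: "weak_O (\<lambda>\<eta> z. texp p (\<eta> * \<kappa>) ?L \<phi> z - texp (min p 2) (\<eta> * \<kappa>) ?L \<phi> z)
      (\<lambda>\<eta>. \<eta> ^ (min p 2 + 1))"
    using \<phi> by (intro weak_O_texp_tail test_fun_imp_poly_growth test_fun_funpow) auto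
  have "weak_O (\<lambda>\<eta> z. Uop K \<psi> \<eta> \<phi> z - texp (min p 2) (\<eta> * \<kappa>) ?L \<phi> z)
      (\<lambda>\<eta>. \<eta> ^ (min p 2 + 1))"
    using \<psi> L order \<phi> by (intro weak_O_Uop_expansion) auto
  from weak_O_add[OF this weak_O_cmult[OF tail, of "-1"]] show ?thesis
    by simp
qed

lemma weak_O_min_power_le:
  fixes K :: real
  assumes "weak_O R (\<lambda>\<eta>. \<eta> ^ (min p 2 + 1))" "1 \<le> K"
  shows "weak_O R (\<lambda>\<eta>. K * \<eta> ^ (p + 1) + K * \<eta> ^ 3)"
proof (rule weak_O_mono[OF assms(1)])
  show "\<forall>\<^sub>F \<eta> in at_right 0. 0 \<le> \<eta> ^ (min p 2 + 1) \<and>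
      \<eta> ^ (min p 2 + 1) \<le> K * \<eta> ^ (p + 1) + K * \<eta> ^ 3"
    using eventually_at_right_0_unit_interval
  proof eventually_elim
    case (elim \<eta>)
    have "\<eta> ^ (min p 2 + 1) = \<eta> ^ (p + 1) \<or> \<eta> ^ (min p 2 + 1) = \<eta> ^ 3"
      by (cases "p \<le> 2") (simp_all add: min_def)
    moreover have "\<eta> ^ (p + 1) \<le> K * \<eta> ^ (p + 1)" "\<eta> ^ 3 \<le> K * \<eta> ^ 3"
      using mult_right_mono[OF \<open>1 \<le> K\<close>] elim by simp_all
    moreover have "0 \<le> \<eta> ^ (min p 2 + 1)" "0 \<le> K * \<eta> ^ (p + 1)" "0 \<le> K * \<eta> ^ 3"
      using assms(2) elim by simp_all
    ultimately show ?case by linarith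
  qed
qed

theorem theorem2:
  fixes K p :: nat and C :: real and M :: "real^'d^'d"
    and U :: "nat \<Rightarrow> real^'d \<Rightarrow> real"
    and \<psi> :: "nat \<Rightarrow> real \<Rightarrow> ('d::finite) phase \<Rightarrow> 'd phase measure"
  assumes "K \<ge> 1"
    and "C > 0"
    and "transpose M = M" and "\<forall>x. x \<noteq> 0 \<longrightarrow> x \<bullet> (M *v x) > 0"
    and "\<forall>i\<in>{1..K}. smooth_bdd_deriv (U i)"
    and "\<forall>i\<in>{1..K}. good_step (\<psi> i)"
    and "\<forall>i\<in>{1..K}. \<forall>\<phi>. test_fun \<phi> \<longrightarrow>
           weak_O (\<lambda>\<eta> z. (\<integral>z1. \<phi> z1 \<partial>(\<psi> i \<eta> z))
                         - texp p (\<eta> * real K) (Lop (U i) (1 / real K) (C / real K) (matrix_inv M)) \<phi> z)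
                  (\<lambda>\<eta>. \<eta> ^ (p + 1))"
  shows "\<forall>\<phi>. test_fun \<phi> \<longrightarrow>
           weak_O (\<lambda>\<eta> z. Uop K \<psi> \<eta> \<phi> z
                         - texp p (\<eta> * real K) (Lop (\<lambda>\<theta>. \<Sum>i=1..K. U i \<theta>) 1 C (matrix_inv M)) \<phi> z)
                  (\<lambda>\<eta>. real K * \<eta> ^ (p + 1) + real K * \<eta> ^ 3)"
proof (intro allI impI)
  fix \<phi> :: "'d phase \<Rightarrow> real" assume \<phi>: "test_fun \<phi>"
  define L where "L i = Lop (U i) (1 / K) (C / K) (matrix_inv M)" for i
  have "Lop (\<lambda>\<theta>. \<Sum>i=1..K. U i \<theta>) 1 C (matrix_inv M) = (\<lambda>f z. \<Sum>i\<in>{1..K}. L i f z)"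
    using assms(1,5) by (subst Lop_sum_potentials) (auto simp: L_def smooth_bdd_deriv_imp_differentiable)
  moreover have "weak_O (\<lambda>\<eta> z. Uop K \<psi> \<eta> \<phi> z - texp p (\<eta> * K) (\<lambda>f z. \<Sum>i\<in>{1..K}. L i f z) \<phi> z)
      (\<lambda>\<eta>. \<eta> ^ (min p 2 + 1))"
    using assms(5-7) \<phi>
    by (intro weak_O_Uop_texp) (auto simp: L_def good_step_moment_bounded test_linear_Lop)
  ultimately show "weak_O (\<lambda>\<eta> z. Uop K \<psi> \<eta> \<phi> z
      - texp p (\<eta> * K) (Lop (\<lambda>\<theta>. \<Sum>i=1..K. U i \<theta>) 1 C (matrix_inv M)) \<phi> z)
      (\<lambda>\<eta>. K * \<eta> ^ (p + 1) + K * \<eta> ^ 3)"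
    using assms(1) by (intro weak_O_min_power_le) simp_all
qed

end
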